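(* Let $g\in BF$ be an element with tree-braid-tree diagram $(\mathrm{T}_{+},\sigma,\mathrm{T}_{-})$, let $\ell_u(\mathrm{T}_+)\mapsto\ell_v(\mathrm{T}_-)$ be a branch of $g$, let $h$ be an element of $F<BF$, and let $h'=(h)_{[v]}$. Then $\mathcal{N}(gh')=\mathcal{N}(g)+\mathcal{N}(h)-1$.
   Context: The braided Thompson group $BV$ consists of equivalence classes of tree-braid-tree diagrams $(\mathrm{T}_+,\beta,\mathrm{T}_-)$: two rooted finite binary trees with the same number $m$ of leaves and a braid $\beta\in B_m$ joining leaves of $\mathrm{T}_+$ to those of $\mathrm{T}_-$, modulo adding/removing carets (splitting a strand into two parallel strands) and moving carets through crossings; multiplication is stacking and reducing. $BF\le BV$ is the subgroup of elements whose braid is a pure braid (each strand joins the $i$-th leaf of the source tree to the $i$-th leaf of the target tree); Thompson's group $F\le BF$ is the subgroup with trivial braid. $\mathcal{N}(g)$ is the number of leaves of each tree in the reduced diagram of $g$. Leaves are identified with binary words; a branch $\ell_u(\mathrm{T}_+)\mapsto\ell_v(\mathrm{T}_-)$ means leaf $u$ of the source tree is joined by a strand to leaf $v$ of the target tree. For $h\in F$ with tree pair $(\mathrm{H}_+,\mathrm{id},\mathrm{H}_-)$, $(h)_{[v]}\in F$ is obtained from a tree pair $(\mathrm{T},\mathrm{id},\mathrm{T})$ having $v$ as a leaf by attaching $\mathrm{H}_+$ at leaf $v$ of the source tree and $\mathrm{H}_-$ at leaf $v$ of the target tree. *)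

theory Defs
  imports Main
begin

datatype tree = Leaf | Node tree tree

text \<open>Leaves in left-to-right order, each identified with its binary address
  (False = 0 = left child, True = 1 = right child).\<close>
fun leaves :: "tree \<Rightarrow> bool list list" where
  "leaves Leaf = [[]]"
| "leaves (Node l r) = map (Cons False) (leaves l) @ map (Cons True) (leaves r)"

definition num_leaves :: "tree \<Rightarrow> nat" where
  "num_leaves t = length (leaves t)"

fun graft :: "tree \<Rightarrow> bool list \<Rightarrow> tree \<Rightarrow> tree" where
  "graft Leaf [] s = s"
| "graft (Node l r) (False # u) s = Node (graft l u s) r"
| "graft (Node l r) (True # u) s = Node l (graft r u s)"
| "graft t _ s = t"

definition expand :: "tree \<Rightarrow> nat \<Rightarrow> tree" where
  "expand t i = graft t (leaves t ! i) (Node Leaf Leaf)"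

text \<open>A braid word is a list of Artin generators: (a, True) is sigma_a, (a, False)
  is its inverse; sigma_a crosses the strands at positions a and a+1 (0-indexed).
  Words are read from the source tree (top) to the target tree (bottom).\<close>
type_synonym bword = "(nat \<times> bool) list"

definition swp :: "nat \<Rightarrow> nat \<Rightarrow> nat" where
  "swp a p = (if p = a then a + 1 else if p = a + 1 then a else p)"

text \<open>Final position of the strand starting at position p.\<close>
fun bpos :: "bword \<Rightarrow> nat \<Rightarrow> nat" where
  "bpos [] p = p"
| "bpos ((a, s) # w) p = bpos w (swp a p)"

inductive braid_step :: "bword \<Rightarrow> bword \<Rightarrow> bool" where
  cancel: "braid_step (xs @ [(a, s), (a, \<not> s)] @ ys) (xs @ ys)"
| comm: "a + 1 < b \<or> b + 1 < a \<Longrightarrow>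
     braid_step (xs @ [(a, s), (b, t)] @ ys) (xs @ [(b, t), (a, s)] @ ys)"
| braid: "braid_step (xs @ [(a, True), (a + 1, True), (a, True)] @ ys)
                     (xs @ [(a + 1, True), (a, True), (a + 1, True)] @ ys)"

text \<open>Cabling: the strand that starts at position p is doubled into two parallel
  strands.\<close>
fun cable :: "nat \<Rightarrow> bword \<Rightarrow> bword" where
  "cable p [] = []"
| "cable p ((a, s) # w) =
     (if a + 1 < p then [(a, s)]
      else if a + 1 = p then [(a, s), (a + 1, s)]
      else if a = p then [(p + 1, s), (p, s)]
      else [(a + 1, s)]) @ cable (swp a p) w"

type_synonym diag = "tree \<times> bword \<times> tree"

definition wf_diag :: "diag \<Rightarrow> bool" where
  "wf_diag D = (case D of (Tp, w, Tm) \<Rightarrow>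
     num_leaves Tp = num_leaves Tm \<and> (\<forall>(a, s) \<in> set w. a + 1 < num_leaves Tp))"

definition dleaves :: "diag \<Rightarrow> nat" where
  "dleaves D = num_leaves (fst D)"

text \<open>Elementary moves: replacing the braid by an equal braid, and adding a caret
  (splitting the strand starting at source leaf i into two parallel strands;
  this also realises moving carets through crossings).\<close>
inductive dstep :: "diag \<Rightarrow> diag \<Rightarrow> bool" where
  braid_move: "wf_diag (Tp, w, Tm) \<Longrightarrow> wf_diag (Tp, w', Tm) \<Longrightarrow> braid_step w w' \<Longrightarrow>
     dstep (Tp, w, Tm) (Tp, w', Tm)"
| caret_move: "wf_diag (Tp, w, Tm) \<Longrightarrow> i < num_leaves Tp \<Longrightarrow>
     dstep (Tp, w, Tm) (expand Tp i, cable i w, expand Tm (bpos w i))"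

definition diag_equiv :: "diag \<Rightarrow> diag \<Rightarrow> bool" where
  "diag_equiv = equivclp dstep"

text \<open>The element of BV represented by a diagram (its equivalence class).\<close>
definition elt :: "diag \<Rightarrow> diag set" where
  "elt D = {D'. diag_equiv D D'}"

text \<open>Multiplication: stack (g on top, target tree of g glued to source tree of h)
  and take the class of the result.\<close>
definition mult :: "diag set \<Rightarrow> diag set \<Rightarrow> diag set" where
  "mult X Y = {D. \<exists>Tp w Tm w' Sm. (Tp, w, Tm) \<in> X \<and> (Tm, w', Sm) \<in> Y \<and>
                    diag_equiv (Tp, w @ w', Sm) D}"

text \<open>N(g): number of leaves of the reduced diagram, i.e. the minimal number of
  leaves of a diagram representing g.\<close>
definition NN :: "diag set \<Rightarrow> nat" where
  "NN X = (LEAST n. \<exists>D \<in> X. dleaves D = n)"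

definition reduced :: "diag \<Rightarrow> bool" where
  "reduced D = (wf_diag D \<and> dleaves D = NN (elt D))"

text \<open>Membership in BF (pure braid) and F (trivial braid).\<close>
definition in_BF :: "diag \<Rightarrow> bool" where
  "in_BF D = (case D of (Tp, w, Tm) \<Rightarrow> wf_diag D \<and> (\<forall>i < num_leaves Tp. bpos w i = i))"

definition in_F :: "diag \<Rightarrow> bool" where
  "in_F D = (case D of (Tp, w, Tm) \<Rightarrow> wf_diag D \<and> w = [])"

text \<open>(h)_[v] computed from a tree T having v as a leaf and a tree pair (Hp, id, Hm) of h.\<close>
definition sub_at :: "tree \<Rightarrow> bool list \<Rightarrow> tree \<Rightarrow> tree \<Rightarrow> diag" where
  "sub_at T v Hp Hm = (graft T v Hp, [], graft T v Hm)"

end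

theory Submission
  imports Defs
begin

text \<open>Diagrams with pure braids, taken modulo the braid relations, form a terminating and locally
  confluent rewriting system under the removal of carets. Hence every element of \<open>BF\<close> has an
  irreducible diagram, unique up to braid relations, with \<open>\<N>\<close> leaves, and every diagram of the
  element arises from it by adding carets; in particular the product can be read off any two
  representatives whose glued trees agree.

  Let \<open>(K1, K2)\<close> be the irreducible tree pair of \<open>h\<close>. Since the braid of \<open>g\<close> is pure, the branch
  from leaf \<open>i\<close> ends at leaf \<open>i\<close>. Adding to the reduced diagram of \<open>g\<close> the carets of \<open>K1\<close> below
  leaf \<open>i\<close>, and lifting this diagram and \<open>(h)\<^bsub>[v]\<^esub>\<close> to a common tree, shows that \<open>g h'\<close> is
  represented by \<open>g\<close> with \<open>K1\<close> grafted at source leaf \<open>i\<close> and \<open>K2\<close> at target leaf \<open>i\<close>. This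
  diagram is irreducible: a caret of it inside the grafted block would reduce \<open>(K1, K2)\<close>, and one
  outside the block would reduce \<open>g\<close>. It has \<open>\<N>(g) + \<N>(h) - 1\<close> leaves.\<close>

section \<open>Braid words on a fixed number of strands\<close>

definition on_strands :: "nat \<Rightarrow> bword \<Rightarrow> bool" where
  "on_strands n w = (\<forall>(a, s) \<in> set w. a + 1 < n)"

definition braid_step_on :: "nat \<Rightarrow> bword \<Rightarrow> bword \<Rightarrow> bool" where
  "braid_step_on n x y = (braid_step x y \<and> on_strands n x \<and> on_strands n y)"

definition braid_eq :: "nat \<Rightarrow> bword \<Rightarrow> bword \<Rightarrow> bool" where
  "braid_eq n = equivclp (braid_step_on n)"

definition distant :: "nat \<Rightarrow> nat \<Rightarrow> bool" where
  "distant a b = (a + 1 < b \<or> b + 1 < a)"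

lemma on_strands_simps [simp]:
  "on_strands n []"
  "on_strands n ((a, s) # w) = (a + 1 < n \<and> on_strands n w)"
  "on_strands n (xs @ ys) = (on_strands n xs \<and> on_strands n ys)"
  by (auto simp: on_strands_def)

lemma bpos_append [simp]: "bpos (xs @ ys) p = bpos ys (bpos xs p)"
  by (induction xs arbitrary: p) auto

lemma cable_append [simp]: "cable p (xs @ ys) = cable p xs @ cable (bpos xs p) ys"
  by (induction xs arbitrary: p) auto

lemma swp_swp [simp]: "swp a (swp a p) = p"
  by (simp add: swp_def)

lemma swp_eq_iff: "swp a p = swp a q \<longleftrightarrow> p = q"
  by (metis swp_swp)

lemma swp_less: "p < n \<Longrightarrow> a + 1 < n \<Longrightarrow> swp a p < n"
  by (simp add: swp_def)

lemma swp_commute: "distant a b \<Longrightarrow> swp b (swp a p) = swp a (swp b p)"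
  by (auto simp: swp_def distant_def)

lemma bpos_less: "on_strands n w \<Longrightarrow> p < n \<Longrightarrow> bpos w p < n"
  by (induction w arbitrary: p) (auto simp: swp_less)

lemma braid_step_bpos: "braid_step x y \<Longrightarrow> bpos x = bpos y"
proof (induction rule: braid_step.induct)
  case (comm a b xs s t ys)
  then show ?case by (auto simp: fun_eq_iff swp_commute distant_def)
qed (auto simp: fun_eq_iff swp_def)

lemma braid_eq_refl [simp]: "braid_eq n x x"
  by (simp add: braid_eq_def)

lemma braid_eq_sym: "braid_eq n x y \<Longrightarrow> braid_eq n y x"
  by (simp add: braid_eq_def equivclp_sym)

lemma braid_eq_trans [trans]: "braid_eq n x y \<Longrightarrow> braid_eq n y z \<Longrightarrow> braid_eq n x z"
  unfolding braid_eq_def by (rule equivclp_trans)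

lemma equivp_braid_eq: "equivp (braid_eq n)"
  unfolding braid_eq_def by (simp add: equivp_evquivclp)

lemma braid_step_on_imp_eq: "braid_step_on n x y \<Longrightarrow> braid_eq n x y"
  unfolding braid_eq_def by (rule r_into_equivclp)

lemma braid_eq_map_equivp:
  assumes "braid_eq n x y" and "\<And>x y. braid_step_on n x y \<Longrightarrow> R (f x) (f y)" and "equivp R"
  shows "R (f x) (f y)"
  using assms(1) unfolding braid_eq_def
proof (induction rule: equivclp_induct)
  case base
  then show ?case using assms(3) by (simp add: equivp_reflp)
next
  case (step y z)
  then show ?case using assms(2,3) by (meson equivp_symp equivp_transp)
qed

lemma braid_eq_on_strands: "braid_eq n x y \<Longrightarrow> on_strands n x \<Longrightarrow> on_strands n y"
  unfolding braid_eq_def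
  by (induction rule: equivclp_induct) (auto simp: braid_step_on_def)

lemma braid_step_context: "braid_step x y \<Longrightarrow> braid_step (us @ x @ vs) (us @ y @ vs)"
proof (induction rule: braid_step.induct)
  case (cancel xs a s ys)
  then show ?case using braid_step.cancel[of "us @ xs" a s "ys @ vs"] by simp
next
  case (comm a b xs s t ys)
  then show ?case using braid_step.comm[of a b "us @ xs" s t "ys @ vs"] by simp
next
  case (braid xs a ys)
  then show ?case using braid_step.braid[of "us @ xs" a "ys @ vs"] by simp
qed

lemma braid_eq_context:
  "braid_eq n x y \<Longrightarrow> on_strands n us \<Longrightarrow> on_strands n vs \<Longrightarrow> braid_eq n (us @ x @ vs) (us @ y @ vs)"
  by (rule braid_eq_map_equivp[where f = "\<lambda>x. us @ x @ vs", OF _ _ equivp_braid_eq])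
    (auto simp: braid_step_on_def braid_step_context intro!: braid_step_on_imp_eq)

lemma braid_eq_append:
  assumes "braid_eq n x x'" "braid_eq n y y'" "on_strands n x" "on_strands n y"
  shows "braid_eq n (x @ y) (x' @ y')"
proof -
  have "braid_eq n ([] @ x @ y) ([] @ x' @ y)"
    using assms by (intro braid_eq_context) auto
  moreover have "braid_eq n (x' @ y @ []) (x' @ y' @ [])"
    using assms braid_eq_on_strands by (intro braid_eq_context) auto
  ultimately show ?thesis by (auto intro: braid_eq_trans)
qed

lemma braid_eq_cancel:
  "x = xs @ [(a, s), (a, \<not> s)] @ ys \<Longrightarrow> y = xs @ ys \<Longrightarrow> on_strands n x \<Longrightarrow> braid_eq n x y"
  using braid_step.cancel[of xs a s ys] by (intro braid_step_on_imp_eq) (auto simp: braid_step_on_def)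

lemma braid_eq_commute:
  "x = xs @ [(a, s), (b, t)] @ ys \<Longrightarrow> y = xs @ [(b, t), (a, s)] @ ys \<Longrightarrow> distant a b \<Longrightarrow>
    on_strands n x \<Longrightarrow> braid_eq n x y"
  using braid_step.comm[of a b xs s t ys]
  by (intro braid_step_on_imp_eq) (auto simp: braid_step_on_def distant_def)

lemma braid_eq_braid:
  "x = xs @ [(a, True), (a + 1, True), (a, True)] @ ys \<Longrightarrow>
    y = xs @ [(a + 1, True), (a, True), (a + 1, True)] @ ys \<Longrightarrow> on_strands n x \<Longrightarrow> braid_eq n x y"
  using braid_step.braid[of xs a ys] by (intro braid_step_on_imp_eq) (auto simp: braid_step_on_def)

lemma braid_eq_distant_swap1:
  "\<forall>(a, s) \<in> set xs. distant a b \<Longrightarrow> on_strands n (us @ xs @ [(b, t)] @ vs) \<Longrightarrow>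
    braid_eq n (us @ xs @ [(b, t)] @ vs) (us @ [(b, t)] @ xs @ vs)"
proof (induction xs arbitrary: us)
  case (Cons x xs)
  obtain a s where x: "x = (a, s)" by (cases x)
  have "braid_eq n ((us @ [x]) @ xs @ [(b, t)] @ vs) ((us @ [x]) @ [(b, t)] @ xs @ vs)"
    using Cons by (intro Cons.IH) auto
  moreover have "braid_eq n ((us @ [x]) @ [(b, t)] @ xs @ vs) (us @ [(b, t)] @ (x # xs) @ vs)"
    using Cons.prems by (intro braid_eq_commute[where xs = us and ys = "xs @ vs" and a = a and s = s])
      (auto simp: x)
  ultimately show ?case by (auto intro: braid_eq_trans)
qed simp

lemma braid_eq_distant_swap:
  "\<forall>(a, s) \<in> set xs. \<forall>(b, t) \<in> set ys. distant a b \<Longrightarrow> on_strands n (us @ xs @ ys @ vs) \<Longrightarrow>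
    braid_eq n (us @ xs @ ys @ vs) (us @ ys @ xs @ vs)"
proof (induction ys arbitrary: us)
  case (Cons y ys)
  obtain b t where y: "y = (b, t)" by (cases y)
  have "braid_eq n (us @ xs @ [(b, t)] @ (ys @ vs)) (us @ [(b, t)] @ xs @ (ys @ vs))"
    using Cons.prems by (intro braid_eq_distant_swap1) (auto simp: y)
  moreover have "braid_eq n ((us @ [(b, t)]) @ xs @ ys @ vs) ((us @ [(b, t)]) @ ys @ xs @ vs)"
    using Cons.prems by (intro Cons.IH) (auto simp: y)
  ultimately show ?case by (auto simp: y intro: braid_eq_trans)
qed simp

section \<open>Cabling and deleting a strand\<close>

text \<open>When strand \<open>p\<close> is doubled, strand \<open>q \<noteq> p\<close> moves to \<open>cable_pos p q\<close>; when strand \<open>q\<close>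
  is deleted, strand \<open>p \<noteq> q\<close> moves to \<open>delete_pos q p\<close>.\<close>

definition cable_pos :: "nat \<Rightarrow> nat \<Rightarrow> nat" where
  "cable_pos p q = (if q < p then q else Suc q)"

definition delete_pos :: "nat \<Rightarrow> nat \<Rightarrow> nat" where
  "delete_pos q p = (if p < q then p else p - 1)"

definition cable_gen :: "nat \<Rightarrow> nat \<Rightarrow> bool \<Rightarrow> bword" where
  "cable_gen p a s =
    (if a + 1 < p then [(a, s)]
     else if a + 1 = p then [(a, s), (a + 1, s)]
     else if a = p then [(p + 1, s), (p, s)]
     else [(a + 1, s)])"

definition delete_gen :: "nat \<Rightarrow> nat \<Rightarrow> bool \<Rightarrow> bword" where
  "delete_gen q a s =
    (if a + 1 < q then [(a, s)]
     else if a = q \<or> a + 1 = q then []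
     else [(a - 1, s)])"

fun delete_strand :: "nat \<Rightarrow> bword \<Rightarrow> bword" where
  "delete_strand q [] = []"
| "delete_strand q ((a, s) # w) = delete_gen q a s @ delete_strand (swp a q) w"

lemma cable_Cons: "cable p ((a, s) # w) = cable_gen p a s @ cable (swp a p) w"
  by (simp add: cable_gen_def)

declare cable.simps(2) [simp del]

lemma delete_strand_append [simp]:
  "delete_strand p (xs @ ys) = delete_strand p xs @ delete_strand (bpos xs p) ys"
  by (induction xs arbitrary: p) auto

lemma cable_pos_eq_iff: "cable_pos i a = cable_pos i b \<longleftrightarrow> a = b"
  by (auto simp: cable_pos_def)

lemma on_strands_cable: "on_strands n w \<Longrightarrow> p < n \<Longrightarrow> on_strands (Suc n) (cable p w)"
  by (induction w arbitrary: p) (auto simp: swp_less cable_Cons cable_gen_def)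

lemma on_strands_cable_gen: "a + 1 < n \<Longrightarrow> p < n \<Longrightarrow> on_strands (Suc n) (cable_gen p a s)"
  by (auto simp: cable_gen_def)

lemma on_strands_delete_gen: "a + 1 < Suc n \<Longrightarrow> q \<le> n \<Longrightarrow> on_strands n (delete_gen q a s)"
  by (auto simp: delete_gen_def)

lemma on_strands_delete_strand: "on_strands (Suc n) w \<Longrightarrow> q \<le> n \<Longrightarrow> on_strands n (delete_strand q w)"
proof (induction w arbitrary: q)
  case (Cons x w)
  then show ?case by (cases x) (auto simp: swp_def delete_gen_def)
qed simp

lemma bpos_cable_gen_same: "bpos (cable_gen p a s) p = swp a p"
  by (simp add: cable_gen_def swp_def)

lemma bpos_cable_gen_Suc: "bpos (cable_gen p a s) (Suc p) = Suc (swp a p)"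
  by (simp add: cable_gen_def swp_def)

lemma bpos_cable_gen_other:
  "q \<noteq> p \<Longrightarrow> bpos (cable_gen p a s) (cable_pos p q) = cable_pos (swp a p) (swp a q)"
  by (simp add: cable_gen_def swp_def cable_pos_def)

lemma bpos_delete_gen_other:
  "q \<noteq> p \<Longrightarrow> bpos (delete_gen q a s) (delete_pos q p) = delete_pos (swp a q) (swp a p)"
proof -
  assume "q \<noteq> p"
  have "a + 1 < q \<or> a = q \<or> a + 1 = q \<or> q < a" by linarith
  then show ?thesis using \<open>q \<noteq> p\<close>
    by (elim disjE) (auto simp: delete_gen_def swp_def delete_pos_def)
qed

lemma delete_strand_cable_gen_Suc: "delete_strand (Suc p) (cable_gen p a s) = [(a, s)]"
  by (auto simp: cable_gen_def delete_gen_def swp_def)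

lemma delete_strand_cable_gen_commute:
  "q \<noteq> p \<Longrightarrow> delete_strand (cable_pos p q) (cable_gen p a s) = cable (delete_pos q p) (delete_gen q a s)"
proof -
  assume "q \<noteq> p"
  have "p < a \<or> p = a \<or> p = a + 1 \<or> a + 1 < p" "q < a \<or> q = a \<or> q = a + 1 \<or> a + 1 < q"
    by linarith+
  then show ?thesis using \<open>q \<noteq> p\<close>
    by (elim disjE)
      (auto simp: cable_gen_def delete_gen_def swp_def cable_Cons cable_pos_def delete_pos_def)
qed

lemma bpos_cable_same: "bpos (cable p w) p = bpos w p"
proof (induction w arbitrary: p)
  case (Cons x w)
  then show ?case by (cases x) (simp add: cable_Cons bpos_cable_gen_same)
qed simp

lemma bpos_cable_Suc: "bpos (cable p w) (Suc p) = Suc (bpos w p)"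
proof (induction w arbitrary: p)
  case (Cons x w)
  then show ?case by (cases x) (simp add: cable_Cons bpos_cable_gen_Suc)
qed simp

lemma bpos_cable_other: "q \<noteq> p \<Longrightarrow> bpos (cable p w) (cable_pos p q) = cable_pos (bpos w p) (bpos w q)"
proof (induction w arbitrary: p q)
  case (Cons x w)
  then show ?case by (cases x) (simp add: cable_Cons bpos_cable_gen_other swp_eq_iff)
qed simp

lemma bpos_delete_strand_other:
  "q \<noteq> p \<Longrightarrow> bpos (delete_strand q w) (delete_pos q p) = delete_pos (bpos w q) (bpos w p)"
proof (induction w arbitrary: p q)
  case (Cons x w)
  then show ?case by (cases x) (simp add: bpos_delete_gen_other swp_eq_iff)
qed simp

lemma delete_strand_cable_Suc: "delete_strand (Suc p) (cable p w) = w"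
proof (induction w arbitrary: p)
  case (Cons x w)
  then show ?case by (cases x) (simp add: cable_Cons delete_strand_cable_gen_Suc bpos_cable_gen_Suc)
qed simp

lemma delete_strand_cable_commute:
  "q \<noteq> p \<Longrightarrow> delete_strand (cable_pos p q) (cable p w) = cable (delete_pos q p) (delete_strand q w)"
proof (induction w arbitrary: p q)
  case (Cons x w)
  then show ?case
    by (cases x) (simp add: cable_Cons delete_strand_cable_gen_commute bpos_cable_gen_other
        bpos_delete_gen_other swp_eq_iff)
qed simp

lemma cable_gen_swp_distant: "distant a b \<Longrightarrow> cable_gen (swp b p) a s = cable_gen p a s"
  by (auto simp: cable_gen_def swp_def distant_def)

lemma cable_gen_distant:
  "distant a b \<Longrightarrow> \<forall>(c, s') \<in> set (cable_gen p a s). \<forall>(d, t') \<in> set (cable_gen (swp a p) b t). distant c d"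
proof -
  assume "distant a b"
  have "p < a \<or> p = a \<or> p = a + 1 \<or> a + 1 < p" "p < b \<or> p = b \<or> p = b + 1 \<or> b + 1 < p"
    by linarith+
  then show ?thesis using \<open>distant a b\<close>
    by (elim disjE) (auto simp: cable_gen_def swp_def distant_def)
qed

lemma cable_commute_braid_eq:
  assumes "distant a b" "a + 1 < n" "b + 1 < n" "p < n"
  shows "braid_eq (Suc n) (cable p [(a, s), (b, t)]) (cable p [(b, t), (a, s)])"
proof -
  have "distant b a" using assms(1) by (auto simp: distant_def)
  then have "cable p [(b, t), (a, s)] = [] @ cable_gen (swp a p) b t @ cable_gen p a s @ []"
    using cable_gen_swp_distant[OF assms(1), of p s] cable_gen_swp_distant[of b a p t]
    by (simp add: cable_Cons)
  moreover have "cable p [(a, s), (b, t)] = [] @ cable_gen p a s @ cable_gen (swp a p) b t @ []"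
    by (simp add: cable_Cons)
  ultimately show ?thesis
    using cable_gen_distant[OF assms(1)] assms(2-4)
    by (simp only:) (rule braid_eq_distant_swap, auto simp: on_strands_cable_gen swp_less)
qed

lemma cable_cancel_braid_eq:
  assumes "a + 1 < n" "p < n"
  shows "braid_eq (Suc n) (cable p [(a, s), (a, \<not> s)]) []"
proof -
  consider "p = a" | "p = a + 1" | "p \<noteq> a" "p \<noteq> a + 1" by auto
  then show ?thesis
  proof cases
    case 1
    then have "cable p [(a, s), (a, \<not> s)] = [(a + 1, s)] @ [(a, s), (a, \<not> s)] @ [(a + 1, \<not> s)]"
      by (simp add: cable_Cons cable_gen_def swp_def)
    also have "braid_eq (Suc n) \<dots> ([] @ [(a + 1, s), (a + 1, \<not> s)] @ [])"
      using assms by (intro braid_eq_cancel[where xs = "[(a + 1, s)]"]) auto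
    also have "braid_eq (Suc n) \<dots> []"
      using assms by (intro braid_eq_cancel) auto
    finally show ?thesis .
  next
    case 2
    then have "cable p [(a, s), (a, \<not> s)] = [(a, s)] @ [(a + 1, s), (a + 1, \<not> s)] @ [(a, \<not> s)]"
      by (simp add: cable_Cons cable_gen_def swp_def)
    also have "braid_eq (Suc n) \<dots> ([] @ [(a, s), (a, \<not> s)] @ [])"
      using assms by (intro braid_eq_cancel[where xs = "[(a, s)]"]) auto
    also have "braid_eq (Suc n) \<dots> []"
      using assms by (intro braid_eq_cancel) auto
    finally show ?thesis .
  next
    case 3
    then obtain c where "cable p [(a, s), (a, \<not> s)] = [] @ [(c, s), (c, \<not> s)] @ []" "c + 1 < Suc n"
      using assms by (cases "a + 1 < p") (auto simp: cable_Cons cable_gen_def swp_def)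
    then show ?thesis by (intro braid_eq_cancel) auto
  qed
qed

text \<open>Cabling one strand of \<open>\<sigma>\<^sub>a\<sigma>\<^sub>a\<^sub>+\<^sub>1\<sigma>\<^sub>a\<close> at one of the three strands involved turns the
  braid relation into a chain of four relations on \<open>a, a + 1, a + 2\<close>.\<close>

lemma cable_braid_relation_braid_eq_inner:
  assumes "a + 2 < n" "p \<in> {a, a + 1, a + 2}"
  shows "braid_eq (Suc n) (cable p [(a, True), (a + 1, True), (a, True)])
    (cable p [(a + 1, True), (a, True), (a + 1, True)])"
proof -
  define x y z where "x = (a, True)" and "y = (a + 1, True)" and "z = (a + 2, True)"
  have step: "braid_eq (Suc n) u v" if "braid_step u v" "on_strands (Suc n) u" "on_strands (Suc n) v"
    for u v
    using that by (intro braid_step_on_imp_eq) (simp add: braid_step_on_def)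
  have within: "on_strands (Suc n) us" if "set us \<subseteq> {x, y, z}" for us
    using that assms(1) by (auto simp: on_strands_def x_def y_def z_def)
  have xz: "braid_step (us @ [x, z] @ vs) (us @ [z, x] @ vs)" for us vs
    using braid_step.comm[of a "a + 2" us True True vs] by (simp add: x_def z_def)
  have zx: "braid_step (us @ [z, x] @ vs) (us @ [x, z] @ vs)" for us vs
    using braid_step.comm[of "a + 2" a us True True vs] by (simp add: x_def z_def)
  have xyx: "braid_step (us @ [x, y, x] @ vs) (us @ [y, x, y] @ vs)" for us vs
    using braid_step.braid[of us a vs] by (simp add: x_def y_def)
  have yzy: "braid_step (us @ [y, z, y] @ vs) (us @ [z, y, z] @ vs)" for us vs
    using braid_step.braid[of us "a + 1" vs] by (simp add: y_def z_def numeral_2_eq_2)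
  from assms(2) consider "p = a" | "p = a + 1" | "p = a + 2" by blast
  then show ?thesis
  proof cases
    case 1
    then have "cable p [(a, True), (a + 1, True), (a, True)] = [y, x, z, y, x]"
      by (simp add: cable_Cons cable_gen_def swp_def x_def y_def z_def)
    also have "braid_eq (Suc n) \<dots> [y, z, x, y, x]"
      using xz[of "[y]" "[y, x]"] by (intro step) (simp_all add: within)
    also have "braid_eq (Suc n) \<dots> [y, z, y, x, y]"
      using xyx[of "[y, z]" "[]"] by (intro step) (simp_all add: within)
    also have "braid_eq (Suc n) \<dots> [z, y, z, x, y]"
      using yzy[of "[]" "[x, y]"] by (intro step) (simp_all add: within)
    also have "braid_eq (Suc n) \<dots> [z, y, x, z, y]"
      using zx[of "[z, y]" "[y]"] by (intro step) (simp_all add: within)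
    also have "[z, y, x, z, y] = cable p [(a + 1, True), (a, True), (a + 1, True)]"
      using 1 by (simp add: cable_Cons cable_gen_def swp_def x_def y_def z_def)
    finally show ?thesis .
  next
    case 2
    then have "cable p [(a, True), (a + 1, True), (a, True)] = [x, y, z, y, x]"
      by (simp add: cable_Cons cable_gen_def swp_def x_def y_def z_def)
    also have "braid_eq (Suc n) \<dots> [x, z, y, z, x]"
      using yzy[of "[x]" "[x]"] by (intro step) (simp_all add: within)
    also have "braid_eq (Suc n) \<dots> [z, x, y, z, x]"
      using xz[of "[]" "[y, z, x]"] by (intro step) (simp_all add: within)
    also have "braid_eq (Suc n) \<dots> [z, x, y, x, z]"
      using zx[of "[z, x, y]" "[]"] by (intro step) (simp_all add: within)
    also have "braid_eq (Suc n) \<dots> [z, y, x, y, z]"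
      using xyx[of "[z]" "[z]"] by (intro step) (simp_all add: within)
    also have "[z, y, x, y, z] = cable p [(a + 1, True), (a, True), (a + 1, True)]"
      using 2 by (simp add: cable_Cons cable_gen_def swp_def x_def y_def z_def)
    finally show ?thesis .
  next
    case 3
    then have "cable p [(a, True), (a + 1, True), (a, True)] = [x, y, z, x, y]"
      by (simp add: cable_Cons cable_gen_def swp_def x_def y_def z_def)
    also have "braid_eq (Suc n) \<dots> [x, y, x, z, y]"
      using zx[of "[x, y]" "[y]"] by (intro step) (simp_all add: within)
    also have "braid_eq (Suc n) \<dots> [y, x, y, z, y]"
      using xyx[of "[]" "[z, y]"] by (intro step) (simp_all add: within)
    also have "braid_eq (Suc n) \<dots> [y, x, z, y, z]"
      using yzy[of "[y, x]" "[]"] by (intro step) (simp_all add: within)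
    also have "braid_eq (Suc n) \<dots> [y, z, x, y, z]"
      using xz[of "[y]" "[y, z]"] by (intro step) (simp_all add: within)
    also have "[y, z, x, y, z] = cable p [(a + 1, True), (a, True), (a + 1, True)]"
      using 3 by (simp add: cable_Cons cable_gen_def swp_def x_def y_def z_def)
    finally show ?thesis .
  qed
qed

lemma cable_braid_relation_braid_eq:
  assumes "a + 2 < n" "p < n"
  shows "braid_eq (Suc n) (cable p [(a, True), (a + 1, True), (a, True)])
    (cable p [(a + 1, True), (a, True), (a + 1, True)])"
proof -
  consider "p \<in> {a, a + 1, a + 2}" | "p < a" | "a + 2 < p" by fastforce
  then show ?thesis
  proof cases
    case 2
    then show ?thesis
      using assms braid_eq_braid[of _ "[]" "a + 1" "[]" _ "Suc n"]
      by (simp add: cable_Cons cable_gen_def swp_def)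
  next
    case 3
    then show ?thesis
      using assms braid_eq_braid[of _ "[]" a "[]" _ "Suc n"]
      by (simp add: cable_Cons cable_gen_def swp_def)
  qed (use assms cable_braid_relation_braid_eq_inner in blast)
qed

lemma cable_braid_eq_context:
  assumes "braid_eq (Suc n) (cable (bpos xs p) u) (cable (bpos xs p) v)" "bpos u = bpos v"
    and "on_strands n xs" "on_strands n u" "on_strands n ys" "p < n"
  shows "braid_eq (Suc n) (cable p (xs @ u @ ys)) (cable p (xs @ v @ ys))"
proof -
  have "bpos xs p < n" "bpos u (bpos xs p) < n"
    using assms(3-6) by (auto intro: bpos_less)
  then show ?thesis
    using assms by (simp del: bpos_append) (intro braid_eq_context on_strands_cable)
qed

lemma cable_braid_step_on: "braid_step_on n x y \<Longrightarrow> p < n \<Longrightarrow> braid_eq (Suc n) (cable p x) (cable p y)"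
  unfolding braid_step_on_def
proof (elim conjE)
  assume st: "braid_step x y" and x: "on_strands n x" and "on_strands n y" and p: "p < n"
  from st show ?thesis
  proof cases
    case (cancel xs a s ys)
    then have "y = xs @ [] @ ys" by simp
    then show ?thesis
      using cancel x p braid_step.cancel[of "[]" a s "[]"]
      by (simp only:) (intro cable_braid_eq_context;
          auto intro: cable_cancel_braid_eq bpos_less dest: braid_step_bpos)
  next
    case (comm a b xs s t ys)
    then show ?thesis
      using x p braid_step.comm[of a b "[]" s t "[]"]
      by (simp only:) (intro cable_braid_eq_context;
          auto intro: cable_commute_braid_eq bpos_less dest: braid_step_bpos simp: distant_def)
  next
    case (braid xs a ys)
    then have "a + 2 < n" "bpos xs p < n"
      using x p by (auto intro: bpos_less)
    then show ?thesis
      using braid x p braid_step.braid[of "[]" a "[]"] cable_braid_relation_braid_eq[of a n "bpos xs p"]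
      by (simp only:) (intro cable_braid_eq_context; auto dest: braid_step_bpos)
  qed
qed

lemma cable_braid_eq: "braid_eq n x y \<Longrightarrow> p < n \<Longrightarrow> braid_eq (Suc n) (cable p x) (cable p y)"
  by (rule braid_eq_map_equivp[where f = "cable p", OF _ _ equivp_braid_eq])
    (auto intro: cable_braid_step_on)


lemma delete_gen_swp_distant: "distant a b \<Longrightarrow> delete_gen (swp b q) a s = delete_gen q a s"
  by (auto simp: delete_gen_def swp_def distant_def)

lemma delete_gen_distant:
  "distant a b \<Longrightarrow> \<forall>(c, s') \<in> set (delete_gen q a s). \<forall>(d, t') \<in> set (delete_gen (swp a q) b t). distant c d"
proof -
  assume "distant a b"
  have "q < a \<or> q = a \<or> q = a + 1 \<or> a + 1 < q" "q < b \<or> q = b \<or> q = b + 1 \<or> b + 1 < q"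
    by linarith+
  then show ?thesis using \<open>distant a b\<close>
    by (elim disjE) (auto simp: delete_gen_def swp_def distant_def)
qed

lemma delete_commute_braid_eq:
  assumes "distant a b" "a + 1 < Suc n" "b + 1 < Suc n" "q \<le> n"
  shows "braid_eq n (delete_strand q [(a, s), (b, t)]) (delete_strand q [(b, t), (a, s)])"
proof -
  have "distant b a" using assms(1) by (auto simp: distant_def)
  then have "delete_strand q [(b, t), (a, s)] = [] @ delete_gen (swp a q) b t @ delete_gen q a s @ []"
    using delete_gen_swp_distant[OF assms(1), of q s] delete_gen_swp_distant[of b a q t] by simp
  moreover have "delete_strand q [(a, s), (b, t)] = [] @ delete_gen q a s @ delete_gen (swp a q) b t @ []"
    by simp
  moreover have "swp a q \<le> n" using assms(2,4) by (auto simp: swp_def)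
  ultimately show ?thesis
    using delete_gen_distant[OF assms(1)] assms(2-4)
    by (simp only:) (rule braid_eq_distant_swap, auto simp: on_strands_delete_gen)
qed

lemma delete_cancel_braid_eq:
  assumes "a + 1 < Suc n" "q \<le> n"
  shows "braid_eq n (delete_strand q [(a, s), (a, \<not> s)]) []"
proof -
  consider "a + 1 < q" | "a = q \<or> a + 1 = q" | "q < a" by linarith
  then show ?thesis
  proof cases
    case 1
    then have "delete_strand q [(a, s), (a, \<not> s)] = [] @ [(a, s), (a, \<not> s)] @ []"
      by (simp add: delete_gen_def swp_def)
    then show ?thesis using assms 1 by (intro braid_eq_cancel) auto
  next
    case 2
    then show ?thesis by (auto simp: delete_gen_def swp_def)
  next
    case 3
    then have "delete_strand q [(a, s), (a, \<not> s)] = [] @ [(a - 1, s), (a - 1, \<not> s)] @ []"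
      by (simp add: delete_gen_def swp_def)
    then show ?thesis using assms 3 by (intro braid_eq_cancel) auto
  qed
qed

lemma delete_braid_relation_braid_eq:
  assumes "a + 2 < Suc n" "q \<le> n"
  shows "braid_eq n (delete_strand q [(a, True), (a + 1, True), (a, True)])
    (delete_strand q [(a + 1, True), (a, True), (a + 1, True)])"
proof -
  consider "q \<in> {a, a + 1, a + 2}" | "q < a" | "a + 2 < q" by fastforce
  then show ?thesis
  proof cases
    case 1
    then show ?thesis by (auto simp: delete_gen_def swp_def)
  next
    case 2
    then show ?thesis
      using assms braid_eq_braid[of _ "[]" "a - 1" "[]" _ n]
      by (simp add: delete_gen_def swp_def)
  next
    case 3
    then show ?thesis
      using assms braid_eq_braid[of _ "[]" a "[]" _ n]
      by (simp add: delete_gen_def swp_def)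
  qed
qed

lemma delete_strand_braid_eq_context:
  assumes "braid_eq n (delete_strand (bpos xs q) u) (delete_strand (bpos xs q) v)" "bpos u = bpos v"
    and "on_strands (Suc n) xs" "on_strands (Suc n) u" "on_strands (Suc n) ys" "q \<le> n"
  shows "braid_eq n (delete_strand q (xs @ u @ ys)) (delete_strand q (xs @ v @ ys))"
proof -
  have "q < Suc n" using assms(6) by simp
  then have "bpos xs q < Suc n" "bpos u (bpos xs q) < Suc n"
    using assms(3-5) by (auto intro: bpos_less)
  then show ?thesis
    using assms by (simp del: bpos_append) (intro braid_eq_context on_strands_delete_strand; simp)
qed

lemma delete_strand_braid_step_on:
  "braid_step_on (Suc n) x y \<Longrightarrow> q \<le> n \<Longrightarrow> braid_eq n (delete_strand q x) (delete_strand q y)"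
  unfolding braid_step_on_def
proof (elim conjE)
  assume st: "braid_step x y" and x: "on_strands (Suc n) x" and "on_strands (Suc n) y" and q: "q \<le> n"
  have "bpos xs q \<le> n" if "on_strands (Suc n) xs" for xs
    using bpos_less[OF that, of q] q by simp
  note q' = this
  from st show ?thesis
  proof cases
    case (cancel xs a s ys)
    then have "y = xs @ [] @ ys" by simp
    then show ?thesis
      using cancel x q q'[of xs] braid_step.cancel[of "[]" a s "[]"]
        delete_cancel_braid_eq[of a n "bpos xs q" s]
      by (simp only:) (intro delete_strand_braid_eq_context; auto dest: braid_step_bpos)
  next
    case (comm a b xs s t ys)
    then show ?thesis
      using x q q'[of xs] braid_step.comm[of a b "[]" s t "[]"]
        delete_commute_braid_eq[of a b n "bpos xs q" s t]
      by (simp only:) (intro delete_strand_braid_eq_context; auto dest: braid_step_bpos simp: distant_def)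
  next
    case (braid xs a ys)
    then have "a + 2 < Suc n" "bpos xs q \<le> n"
      using x q' by auto
    then show ?thesis
      using braid x q braid_step.braid[of "[]" a "[]"] delete_braid_relation_braid_eq[of a n "bpos xs q"]
      by (simp only:) (intro delete_strand_braid_eq_context; auto dest: braid_step_bpos)
  qed
qed

lemma delete_strand_braid_eq:
  "braid_eq (Suc n) x y \<Longrightarrow> q \<le> n \<Longrightarrow> braid_eq n (delete_strand q x) (delete_strand q y)"
  by (rule braid_eq_map_equivp[where f = "delete_strand q", OF _ _ equivp_braid_eq])
    (auto intro: delete_strand_braid_step_on)


lemma cable_cable_gen_braid_eq:
  assumes "p \<noteq> q" "a + 1 < n" "p < n" "q < n"
  shows "braid_eq (Suc (Suc n)) (cable (cable_pos q p) (cable_gen q a s)) (cable (cable_pos p q) (cable_gen p a s))"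
proof -
  consider "p = a" "q = a + 1" | "p = a + 1" "q = a" | "\<not> (p = a \<and> q = a + 1)" "\<not> (p = a + 1 \<and> q = a)"
    by auto
  then show ?thesis
  proof cases
    case 1
    then have "cable (cable_pos q p) (cable_gen q a s) = [(a + 1, s)] @ [(a, s), (a + 2, s)] @ [(a + 1, s)]"
      and "cable (cable_pos p q) (cable_gen p a s) = [(a + 1, s)] @ [(a + 2, s), (a, s)] @ [(a + 1, s)]"
      by (simp_all add: cable_Cons cable_gen_def swp_def cable_pos_def)
    then show ?thesis
      using assms by (simp only:) (rule braid_eq_commute[where xs = "[(a + 1, s)]"], auto simp: distant_def)
  next
    case 2
    then have "cable (cable_pos q p) (cable_gen q a s) = [(a + 1, s)] @ [(a + 2, s), (a, s)] @ [(a + 1, s)]"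
      and "cable (cable_pos p q) (cable_gen p a s) = [(a + 1, s)] @ [(a, s), (a + 2, s)] @ [(a + 1, s)]"
      by (simp_all add: cable_Cons cable_gen_def swp_def cable_pos_def)
    then show ?thesis
      using assms by (simp only:) (rule braid_eq_commute[where xs = "[(a + 1, s)]"], auto simp: distant_def)
  next
    case 3
    have "p < a \<or> p = a \<or> p = a + 1 \<or> a + 1 < p" "q < a \<or> q = a \<or> q = a + 1 \<or> a + 1 < q"
      by linarith+
    then have "cable (cable_pos q p) (cable_gen q a s) = cable (cable_pos p q) (cable_gen p a s)"
      using assms(1) 3 by (elim disjE) (auto simp: cable_Cons cable_gen_def swp_def cable_pos_def)
    then show ?thesis by simp
  qed
qed

lemma cable_cable_braid_eq:
  "p \<noteq> q \<Longrightarrow> p < n \<Longrightarrow> q < n \<Longrightarrow> on_strands n w \<Longrightarrow>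
    braid_eq (Suc (Suc n)) (cable (cable_pos q p) (cable q w)) (cable (cable_pos p q) (cable p w))"
proof (induction w arbitrary: p q)
  case (Cons x w)
  obtain a s where x: "x = (a, s)" by (cases x)
  let ?p = "swp a p" and ?q = "swp a q"
  have a: "a + 1 < n" and w: "on_strands n w" using Cons.prems x by auto
  have pq: "?p \<noteq> ?q" "?p < n" "?q < n" using Cons.prems a by (auto simp: swp_eq_iff swp_less)
  have pos: "cable_pos q p < Suc n" "cable_pos p q < Suc n" "cable_pos ?q ?p < Suc n"
    using Cons.prems pq by (auto simp: cable_pos_def)
  have "cable (cable_pos q p) (cable q ((a, s) # w))
      = cable (cable_pos q p) (cable_gen q a s) @ cable (cable_pos ?q ?p) (cable ?q w)"
    using Cons.prems by (simp add: cable_Cons bpos_cable_gen_other)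
  also have "braid_eq (Suc (Suc n)) \<dots>
      (cable (cable_pos p q) (cable_gen p a s) @ cable (cable_pos ?p ?q) (cable ?p w))"
    using Cons.prems a w pq pos
    by (intro braid_eq_append Cons.IH cable_cable_gen_braid_eq on_strands_cable on_strands_cable_gen)
      auto
  also have "\<dots> = cable (cable_pos p q) (cable p ((a, s) # w))"
    using Cons.prems by (simp add: cable_Cons bpos_cable_gen_other)
  finally show ?case unfolding x .
qed simp


text \<open>Deleting the other strand of each doubled pair recovers a common braid on one strand
  fewer.\<close>

lemma cable_braid_eq_cable:
  assumes eq: "braid_eq (Suc (Suc m)) (cable i w1) (cable j w2)" and "Suc i < j" "j < Suc m"
    and "on_strands (Suc m) w1" "on_strands (Suc m) w2"
  shows "braid_eq (Suc m) w1 (cable (j - 1) (delete_strand (Suc i) w2))"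
    and "braid_eq (Suc m) w2 (cable i (delete_strand j w1))"
    and "braid_eq m (delete_strand (Suc i) w2) (delete_strand j w1)"
proof -
  have "braid_eq (Suc m) (delete_strand (Suc i) (cable i w1)) (delete_strand (Suc i) (cable j w2))"
    using eq assms(2,3) by (intro delete_strand_braid_eq) auto
  moreover have "delete_strand (Suc i) (cable j w2) = cable (j - 1) (delete_strand (Suc i) w2)"
    using delete_strand_cable_commute[of "Suc i" j w2] assms(2) by (simp add: cable_pos_def delete_pos_def)
  ultimately show w1: "braid_eq (Suc m) w1 (cable (j - 1) (delete_strand (Suc i) w2))"
    by (simp add: delete_strand_cable_Suc)
  have "braid_eq (Suc m) (delete_strand (Suc j) (cable j w2)) (delete_strand (Suc j) (cable i w1))"
    using eq assms(3) by (intro delete_strand_braid_eq) (auto intro: braid_eq_sym)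
  moreover have "delete_strand (Suc j) (cable i w1) = cable i (delete_strand j w1)"
    using delete_strand_cable_commute[of j i w1] assms(2) by (simp add: cable_pos_def delete_pos_def)
  ultimately show "braid_eq (Suc m) w2 (cable i (delete_strand j w1))"
    by (simp add: delete_strand_cable_Suc)
  have "braid_eq m (delete_strand j w1) (delete_strand j (cable (j - 1) (delete_strand (Suc i) w2)))"
    using w1 assms(3) by (intro delete_strand_braid_eq) auto
  then show "braid_eq m (delete_strand (Suc i) w2) (delete_strand j w1)"
    using delete_strand_cable_Suc[of "j - 1"] assms(2) by (simp add: braid_eq_sym)
qed

section \<open>Binary trees\<close>

abbreviation nl :: "tree \<Rightarrow> nat" where
  "nl \<equiv> num_leaves"

lemma nl_Leaf [simp]: "nl Leaf = 1"
  by (simp add: num_leaves_def)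

lemma nl_Node [simp]: "nl (Node l r) = nl l + nl r"
  by (simp add: num_leaves_def)

lemma nl_pos [simp]: "0 < nl t"
  by (induction t) auto

lemma nl_ge1: "1 \<le> nl t"
  using nl_pos[of t] by linarith

lemma nl_eq_1: "nl t = 1 \<Longrightarrow> t = Leaf"
proof (cases t)
  case (Node l r)
  then show "nl t = 1 \<Longrightarrow> t = Leaf" using nl_pos[of l] nl_pos[of r] by simp
qed simp

lemma leaves_Node_nth:
  "i < nl l + nl r \<Longrightarrow>
    leaves (Node l r) ! i = (if i < nl l then False # leaves l ! i else True # leaves r ! (i - nl l))"
  by (auto simp: nth_append num_leaves_def)

lemma leaves_nth_inj: "i < nl t \<Longrightarrow> j < nl t \<Longrightarrow> leaves t ! i = leaves t ! j \<Longrightarrow> i = j"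
proof -
  have "distinct (leaves t)"
    by (induction t) (auto simp: distinct_map inj_on_def)
  then show "i < nl t \<Longrightarrow> j < nl t \<Longrightarrow> leaves t ! i = leaves t ! j \<Longrightarrow> i = j"
    by (simp add: nth_eq_iff_index_eq num_leaves_def)
qed

fun add_caret :: "tree \<Rightarrow> nat \<Rightarrow> tree" where
  "add_caret Leaf i = (if i = 0 then Node Leaf Leaf else Leaf)"
| "add_caret (Node l r) i =
    (if i < nl l then Node (add_caret l i) r else Node l (add_caret r (i - nl l)))"

lemma expand_eq_add_caret: "i < nl t \<Longrightarrow> expand t i = add_caret t i"
proof (induction t arbitrary: i)
  case (Node l r)
  then show ?case by (simp add: expand_def leaves_Node_nth del: leaves.simps)
qed (simp add: expand_def)

lemma add_caret_eq_Leaf_iff [simp]: "add_caret t i = Leaf \<longleftrightarrow> t = Leaf \<and> i \<noteq> 0"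
  by (cases t) auto

lemma Leaf_eq_add_caret_iff [simp]: "Leaf = add_caret t i \<longleftrightarrow> t = Leaf \<and> i \<noteq> 0"
  by (cases t) auto

lemma nl_add_caret [simp]: "i < nl t \<Longrightarrow> nl (add_caret t i) = Suc (nl t)"
  by (induction t arbitrary: i) auto

lemma add_caret_inj: "i < nl t1 \<Longrightarrow> i < nl t2 \<Longrightarrow> add_caret t1 i = add_caret t2 i \<Longrightarrow> t1 = t2"
proof (induction t1 arbitrary: t2 i)
  case Leaf
  then show ?case by (cases t2) (auto split: if_splits)
next
  case (Node l r)
  then show ?case
    by (cases t2) (auto split: if_splits, metis add_diff_inverse_nat nat_add_left_cancel_less)
qed

lemma add_caret_commute:
  "i < j \<Longrightarrow> j < nl t \<Longrightarrow> add_caret (add_caret t j) i = add_caret (add_caret t i) (Suc j)"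
  by (induction t arbitrary: i j) (auto simp: Suc_diff_le)

lemma Node_eq_add_caret: "t \<noteq> Leaf \<Longrightarrow> \<exists>u c. c < nl u \<and> t = add_caret u c"
proof (induction t)
  case (Node l r)
  show ?case
  proof (cases "l = Leaf")
    case True
    show ?thesis
    proof (cases "r = Leaf")
      case False
      then obtain u c where "c < nl u" "r = add_caret u c" using Node.IH(2) by auto
      then show ?thesis using True by (intro exI[of _ "Node l u"] exI[of _ "nl l + c"]) auto
    qed (use True in \<open>auto intro!: exI[of _ Leaf] exI[of _ 0]\<close>)
  next
    case False
    then obtain u c where "c < nl u" "l = add_caret u c" using Node.IH(1) by auto
    then show ?thesis by (intro exI[of _ "Node u r"] exI[of _ c]) auto
  qed
qed simp

lemma add_caret_eq_add_caret:
  "i < j \<Longrightarrow> i < nl t1 \<Longrightarrow> j < nl t2 \<Longrightarrow> add_caret t1 i = add_caret t2 j \<Longrightarrow>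
    Suc i < j \<and> (\<exists>v. t1 = add_caret v (j - 1) \<and> t2 = add_caret v i \<and> j - 1 < nl v)"
proof (induction t1 arbitrary: t2 i j)
  case Leaf
  then show ?case by (cases t2) (auto split: if_splits)
next
  case (Node l r)
  then obtain l2 r2 where t2: "t2 = Node l2 r2" by (cases t2) (auto split: if_splits)
  consider "i < nl l" "j < nl l2" | "i < nl l" "\<not> j < nl l2" | "\<not> i < nl l" "\<not> j < nl l2"
    | "\<not> i < nl l" "j < nl l2" by blast
  then show ?case
  proof cases
    case 1
    then obtain v where "Suc i < j" "l = add_caret v (j - 1)" "l2 = add_caret v i" "j - 1 < nl v"
      using Node.IH(1)[of i j l2] Node.prems t2 by auto
    then show ?thesis using 1 Node.prems t2 by (intro conjI exI[of _ "Node v r"]) auto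
  next
    case 2
    then have "add_caret l i = l2" "r = add_caret r2 (j - nl l2)" using Node.prems t2 by auto
    then show ?thesis using 2 Node.prems t2
      by (intro conjI exI[of _ "Node l r2"]) (auto simp: Suc_diff_le)
  next
    case 3
    then have "l = l2" "add_caret r (i - nl l) = add_caret r2 (j - nl l)" using Node.prems t2 by auto
    moreover have "i - nl l < j - nl l" "i - nl l < nl r" "j - nl l < nl r2"
      using Node.prems 3 calculation t2 by auto
    ultimately obtain v where "Suc (i - nl l) < j - nl l" "r = add_caret v (j - nl l - 1)"
      "r2 = add_caret v (i - nl l)" "j - nl l - 1 < nl v" "l = l2"
      using Node.IH(2)[of "i - nl l" "j - nl l" r2] by blast
    then show ?thesis using 3 t2 by (intro conjI exI[of _ "Node l v"]) auto
  next
    case 4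
    then have "l = add_caret l2 j" "j < nl l2" using Node.prems t2 by auto
    then show ?thesis using 4 Node.prems by simp
  qed
qed

text \<open>\<open>subtree t u\<close>: the tree \<open>u\<close> is obtained from \<open>t\<close> by adding carets.\<close>

fun subtree :: "tree \<Rightarrow> tree \<Rightarrow> bool" where
  "subtree Leaf t = True"
| "subtree (Node l r) Leaf = False"
| "subtree (Node l r) (Node l' r') = (subtree l l' \<and> subtree r r')"

lemma subtree_refl [simp]: "subtree t t"
  by (induction t) auto

lemma subtree_trans: "subtree a b \<Longrightarrow> subtree b c \<Longrightarrow> subtree a c"
proof (induction a b arbitrary: c rule: subtree.induct)
  case (3 l r l' r')
  then show ?case by (cases c) auto
qed auto

lemma subtree_nl: "subtree a b \<Longrightarrow> nl a \<le> nl b"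
  by (induction a b rule: subtree.induct) (auto simp: Suc_le_eq)

lemma subtree_add_caret: "i < nl t \<Longrightarrow> subtree t (add_caret t i)"
  by (induction t arbitrary: i) auto

lemma subtree_add_caret_meet:
  "subtree t (add_caret v i) \<Longrightarrow> subtree t (add_caret v j) \<Longrightarrow> i \<noteq> j \<Longrightarrow> i < nl v \<Longrightarrow> j < nl v \<Longrightarrow>
    subtree t v"
proof (induction v arbitrary: t i j)
  case (Node l r)
  show ?case
  proof (cases t)
    case (Node a b)
    consider "i < nl l" "j < nl l" | "\<not> i < nl l" "\<not> j < nl l" | "(i < nl l) \<noteq> (j < nl l)"
      by blast
    then show ?thesis
    proof cases
      case 1
      then show ?thesis using Node.prems Node.IH(1)[of a i j] Node by auto
    next
      case 2
      then show ?thesis using Node.prems Node.IH(2)[of b "i - nl l" "j - nl l"] Node by auto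
    qed (use Node.prems Node in auto)
  qed simp
qed simp

lemma subtree_bottom_caret:
  "subtree t u \<Longrightarrow> t \<noteq> u \<Longrightarrow> \<exists>u1 c. c < nl u1 \<and> u = add_caret u1 c \<and> subtree t u1"
proof (induction u arbitrary: t)
  case Leaf
  then show ?case by (cases t) auto
next
  case (Node l r)
  show ?case
  proof (cases t)
    case Leaf
    then show ?thesis using Node_eq_add_caret[of "Node l r"] by auto
  next
    case (Node a b)
    show ?thesis
    proof (cases "a = l")
      case False
      then obtain l1 c where "c < nl l1" "l = add_caret l1 c" "subtree a l1"
        using Node.IH(1)[of a] Node.prems Node by auto
      then show ?thesis using Node.prems Node by (intro exI[of _ "Node l1 r"] exI[of _ c]) auto
    next
      case True
      then obtain r1 c where "c < nl r1" "r = add_caret r1 c" "subtree b r1"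
        using Node.IH(2)[of b] Node.prems Node by auto
      then show ?thesis
        using Node.prems Node True by (intro exI[of _ "Node l r1"] exI[of _ "nl l + c"]) auto
    qed
  qed
qed

fun tree_join :: "tree \<Rightarrow> tree \<Rightarrow> tree" where
  "tree_join Leaf t = t"
| "tree_join (Node a b) Leaf = Node a b"
| "tree_join (Node a b) (Node c d) = Node (tree_join a c) (tree_join b d)"

lemma subtree_join1: "subtree t (tree_join t u)"
  by (induction t u rule: tree_join.induct) auto

lemma subtree_join2: "subtree u (tree_join t u)"
  by (induction t u rule: tree_join.induct) auto

lemma tree_join_least: "subtree t w \<Longrightarrow> subtree u w \<Longrightarrow> subtree (tree_join t u) w"
proof (induction t u arbitrary: w rule: tree_join.induct)
  case (3 a b c d)
  then show ?case by (cases w) auto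
qed auto


lemma leaves_add_caret_less: "j < c \<Longrightarrow> c < nl t \<Longrightarrow> leaves (add_caret t c) ! j = leaves t ! j"
proof (induction t arbitrary: j c)
  case (Node l r)
  then show ?case by (auto simp: leaves_Node_nth simp del: leaves.simps)
qed simp

lemma leaves_add_caret_greater:
  "c < j \<Longrightarrow> j < nl t \<Longrightarrow> leaves (add_caret t c) ! Suc j = leaves t ! j"
proof (induction t arbitrary: j c)
  case (Node l r)
  then show ?case by (auto simp: leaves_Node_nth Suc_diff_le simp del: leaves.simps)
qed simp

lemma leaves_add_caret_left_child: "c < nl t \<Longrightarrow> leaves (add_caret t c) ! c = leaves t ! c @ [False]"
proof (induction t arbitrary: c)
  case (Node l r)
  then show ?case by (auto simp: leaves_Node_nth simp del: leaves.simps)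
qed simp

lemma leaves_add_caret_right_child:
  "c < nl t \<Longrightarrow> leaves (add_caret t c) ! Suc c = leaves t ! c @ [True]"
proof (induction t arbitrary: c)
  case (Node l r)
  then show ?case by (auto simp: leaves_Node_nth Suc_diff_le simp del: leaves.simps)
qed simp

lemma subtree_leaf_prefix:
  "subtree t u \<Longrightarrow> j < nl t \<Longrightarrow> k < nl u \<Longrightarrow> leaves t ! j = leaves u ! k @ x \<Longrightarrow> x = []"
proof (induction t u arbitrary: j k rule: subtree.induct)
  case (3 l r l' r')
  then have eq: "(if j < nl l then False # leaves l ! j else True # leaves r ! (j - nl l))
      = (if k < nl l' then False # leaves l' ! k else True # leaves r' ! (k - nl l')) @ x"
    by (simp add: leaves_Node_nth del: leaves.simps)
  show ?case
  proof (cases "j < nl l")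
    case True
    then have "k < nl l'" using eq by (auto split: if_splits)
    then show ?thesis using 3 True eq by auto
  next
    case False
    then have "\<not> k < nl l'" using eq by (auto split: if_splits)
    then show ?thesis using 3 False eq by (intro "3.IH"(2)[of "j - nl l" "k - nl l'"]) auto
  qed
qed auto

lemma subtree_bottom_caret_leaf:
  assumes "subtree t u" "t \<noteq> u" "j < nl t" "k < nl u" "leaves t ! j = leaves u ! k"
  shows "\<exists>u1 c k1. c < nl u1 \<and> u = add_caret u1 c \<and> subtree t u1 \<and> k1 < nl u1 \<and> k1 \<noteq> c \<and>
    leaves u1 ! k1 = leaves u ! k \<and> k = (if c < k1 then Suc k1 else k1)"
proof -
  obtain u1 c where u1: "c < nl u1" "u = add_caret u1 c" "subtree t u1"
    using subtree_bottom_caret assms(1,2) by metis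
  consider "k < c" | "k = c" | "k = Suc c" | "Suc c < k" by linarith
  then show ?thesis
  proof cases
    case 1
    then show ?thesis using u1 leaves_add_caret_less[OF 1 u1(1)] by (intro exI[of _ u1] exI[of _ c] exI[of _ k]) auto
  next
    case 2
    then show ?thesis
      using assms u1 leaves_add_caret_left_child subtree_leaf_prefix[OF u1(3) assms(3) u1(1)] by simp
  next
    case 3
    then show ?thesis
      using assms u1 leaves_add_caret_right_child subtree_leaf_prefix[OF u1(3) assms(3) u1(1)] by simp
  next
    case 4
    then obtain k1 where "k = Suc k1" "c < k1" by (cases k) auto
    moreover have "k1 < nl u1" using assms(4) u1 calculation by simp
    ultimately show ?thesis using u1 leaves_add_caret_greater
      by (intro exI[of _ u1] exI[of _ c] exI[of _ k1]) auto
  qed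
qed

lemma tree_join_leaf:
  "j1 < nl t1 \<Longrightarrow> j2 < nl t2 \<Longrightarrow> leaves t1 ! j1 = leaves t2 ! j2 \<Longrightarrow>
    \<exists>j < nl (tree_join t1 t2). leaves (tree_join t1 t2) ! j = leaves t1 ! j1"
proof (induction t1 t2 arbitrary: j1 j2 rule: tree_join.induct)
  case (3 a b c d)
  then have eq: "(if j1 < nl a then False # leaves a ! j1 else True # leaves b ! (j1 - nl a))
      = (if j2 < nl c then False # leaves c ! j2 else True # leaves d ! (j2 - nl c))"
    by (simp add: leaves_Node_nth del: leaves.simps)
  show ?case
  proof (cases "j1 < nl a")
    case True
    then obtain j where "j < nl (tree_join a c)" "leaves (tree_join a c) ! j = leaves a ! j1"
      using "3.IH"(1)[of j1 j2] "3.prems" eq by (auto split: if_splits)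
    then show ?thesis
      using True by (intro exI[of _ j]) (auto simp: leaves_Node_nth simp del: leaves.simps)
  next
    case False
    then have "j1 - nl a < nl b" "j2 - nl c < nl d" "leaves b ! (j1 - nl a) = leaves d ! (j2 - nl c)"
      using "3.prems" eq by (auto split: if_splits)
    then obtain j where "j < nl (tree_join b d)" "leaves (tree_join b d) ! j = leaves b ! (j1 - nl a)"
      using "3.IH"(2) by blast
    then show ?thesis
      using False "3.prems"
      by (intro exI[of _ "nl (tree_join a c) + j"]) (auto simp: leaves_Node_nth simp del: leaves.simps)
  qed
qed auto

section \<open>Grafting a tree at a leaf\<close>

fun graft_at :: "tree \<Rightarrow> nat \<Rightarrow> tree \<Rightarrow> tree" where
  "graft_at Leaf i K = (if i = 0 then K else Leaf)"
| "graft_at (Node l r) i K =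
    (if i < nl l then Node (graft_at l i K) r else Node l (graft_at r (i - nl l) K))"

lemma graft_eq_graft_at: "i < nl t \<Longrightarrow> graft t (leaves t ! i) K = graft_at t i K"
proof (induction t arbitrary: i)
  case (Node l r)
  then show ?case by (auto simp: leaves_Node_nth simp del: leaves.simps)
qed simp

lemma nl_graft_at [simp]: "i < nl t \<Longrightarrow> nl (graft_at t i K) = nl t + nl K - 1"
  by (induction t arbitrary: i) (auto simp: nl_ge1)

lemma graft_at_Leaf [simp]: "graft_at t i Leaf = t"
  by (induction t arbitrary: i) auto

lemma graft_at_add_caret_inner:
  "i < nl t \<Longrightarrow> c < nl K \<Longrightarrow> graft_at t i (add_caret K c) = add_caret (graft_at t i K) (i + c)"
proof (induction t arbitrary: i)
  case (Node l r)
  then show ?case by (cases "i < nl l") (auto simp: add.commute)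
qed simp

lemma graft_at_add_caret_left:
  "c < i \<Longrightarrow> i < nl t \<Longrightarrow> graft_at (add_caret t c) (Suc i) K = add_caret (graft_at t i K) c"
proof (induction t arbitrary: i c)
  case (Node l r)
  consider "i < nl l" | "c < nl l" "\<not> i < nl l" | "\<not> c < nl l" by linarith
  then show ?case
    using Node nl_ge1[of K] by cases (auto simp: Suc_diff_le)
qed simp

lemma graft_at_add_caret_right:
  "i < c \<Longrightarrow> c < nl t \<Longrightarrow> graft_at (add_caret t c) i K = add_caret (graft_at t i K) (c + nl K - 1)"
proof (induction t arbitrary: i c)
  case (Node l r)
  consider "c < nl l" | "i < nl l" "\<not> c < nl l" | "\<not> i < nl l" by linarith
  then show ?case
  proof cases
    case 3
    moreover have "c < nl l + nl r" using Node.prems by simp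
    ultimately have "\<not> c < nl l" "\<not> c + nl K - 1 < nl l" "c + nl K - 1 - nl l = c - nl l + nl K - 1"
      "i - nl l < c - nl l" "c - nl l < nl r"
      using nl_ge1[of K] Node.prems by linarith+
    then show ?thesis using Node.IH(2)[of "i - nl l" "c - nl l"] 3 by simp
  qed (use Node nl_ge1[of K] in \<open>auto simp: less_diff_conv2\<close>)
qed simp

lemma graft_at_add_caret_other:
  "c < nl u \<Longrightarrow> k < nl u \<Longrightarrow> k \<noteq> c \<Longrightarrow>
    graft_at (add_caret u c) (if c < k then Suc k else k) K
      = add_caret (graft_at u k K) (if c < k then c else c + nl K - 1)"
  by (auto simp: graft_at_add_caret_left graft_at_add_caret_right)


text \<open>A caret of the grafted tree \<open>graft_at t i K\<close> at position \<open>c\<close> is either a caret of \<open>K\<close>, or a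
  caret of \<open>t\<close> left or right of the leaf \<open>i\<close>; \<open>U\<close> is what remains after removing it.\<close>

definition caret_of_graft :: "tree \<Rightarrow> nat \<Rightarrow> tree \<Rightarrow> tree \<Rightarrow> nat \<Rightarrow> bool" where
  "caret_of_graft t i K U c \<longleftrightarrow>
    (\<exists>K1. i \<le> c \<and> c - i < nl K1 \<and> K = add_caret K1 (c - i) \<and> U = graft_at t i K1) \<or>
    (\<exists>t1. c + 1 < i \<and> c < nl t1 \<and> t = add_caret t1 c \<and> U = graft_at t1 (i - 1) K) \<or>
    (\<exists>t1. i + nl K \<le> c \<and> c + 1 - nl K < nl t1 \<and> t = add_caret t1 (c + 1 - nl K) \<and> U = graft_at t1 i K)"

lemma caret_of_graftE:
  assumes "caret_of_graft t i K U c"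
  obtains (inner) K1 where "i \<le> c" "c - i < nl K1" "K = add_caret K1 (c - i)" "U = graft_at t i K1"
  | (left) t1 where "c + 1 < i" "c < nl t1" "t = add_caret t1 c" "U = graft_at t1 (i - 1) K"
  | (right) t1 where "i + nl K \<le> c" "c + 1 - nl K < nl t1" "t = add_caret t1 (c + 1 - nl K)"
      "U = graft_at t1 i K"
  using assms unfolding caret_of_graft_def by blast

lemma caret_of_graft_Node_left:
  assumes "caret_of_graft l i K U c" "i < nl l"
  shows "caret_of_graft (Node l r) i K (Node U r) c"
  using assms(1)
proof (cases rule: caret_of_graftE)
  case (inner K1)
  then show ?thesis using assms(2) unfolding caret_of_graft_def by (intro disjI1 exI[of _ K1]) auto
next
  case (left t1)
  then show ?thesis
    using assms(2) unfolding caret_of_graft_def by (intro disjI2 disjI1 exI[of _ "Node t1 r"]) auto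
next
  case (right t1)
  then show ?thesis using assms(2) nl_ge1[of K] unfolding caret_of_graft_def
    by (intro disjI2 exI[of _ "Node t1 r"]) auto
qed

lemma caret_of_graft_Node_right:
  assumes "caret_of_graft r i K U c"
  shows "caret_of_graft (Node l r) (nl l + i) K (Node l U) (nl l + c)"
  using assms
proof (cases rule: caret_of_graftE)
  case (inner K1)
  then show ?thesis unfolding caret_of_graft_def by (intro disjI1 exI[of _ K1]) auto
next
  case (left t1)
  then show ?thesis unfolding caret_of_graft_def by (intro disjI2 disjI1 exI[of _ "Node l t1"]) auto
next
  case (right t1)
  then show ?thesis unfolding caret_of_graft_def by (intro disjI2 exI[of _ "Node l t1"]) auto
qed

lemma graft_at_eq_Leaf_iff: "i < nl t \<Longrightarrow> graft_at t i K = Leaf \<longleftrightarrow> t = Leaf \<and> K = Leaf"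
  by (cases t) auto

lemma graft_at_eq_add_caret:
  "2 \<le> nl K \<Longrightarrow> i < nl t \<Longrightarrow> c < nl U \<Longrightarrow> graft_at t i K = add_caret U c \<Longrightarrow>
    caret_of_graft t i K U c"
proof (induction t arbitrary: i U c)
  case Leaf
  then show ?case by (auto simp: caret_of_graft_def)
next
  case (Node l r)
  obtain ul ur where U: "U = Node ul ur"
    using Node.prems by (cases U) (auto simp: graft_at_eq_Leaf_iff split: if_splits)
  consider "i < nl l" "c < nl ul" | "i < nl l" "\<not> c < nl ul" | "\<not> i < nl l" "c < nl ul"
    | "\<not> i < nl l" "\<not> c < nl ul" by blast
  then show ?case
  proof cases
    case 1
    then show ?thesis using Node U by (auto intro: caret_of_graft_Node_left)
  next
    case 2
    then have "graft_at l i K = ul" "r = add_caret ur (c - nl ul)" using Node.prems U by auto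
    then show ?thesis using 2 Node.prems U nl_ge1[of K] unfolding caret_of_graft_def
      by (intro disjI2 exI[of _ "Node l ur"]) (auto simp: add.commute)
  next
    case 3
    then have "l = add_caret ul c" "graft_at r (i - nl l) K = ur" using Node.prems U by auto
    then show ?thesis using 3 Node.prems U unfolding caret_of_graft_def
      by (intro disjI2 disjI1 exI[of _ "Node ul r"]) auto
  next
    case 4
    then have "l = ul" "graft_at r (i - nl l) K = add_caret ur (c - nl l)" using Node.prems U by auto
    moreover have "i - nl l < nl r" "c - nl l < nl ur" using 4 Node.prems U calculation by auto
    ultimately have "caret_of_graft r (i - nl l) K ur (c - nl l)" using Node.IH(2) Node.prems(1) by blast
    then show ?thesis using caret_of_graft_Node_right[of r "i - nl l" K ur "c - nl l" l] 4 U \<open>l = ul\<close>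
      by simp
  qed
qed


lemma caret_of_graft_inner:
  assumes "caret_of_graft t i K U c" "i \<le> c" "c + 1 < i + nl K"
  shows "\<exists>K1. c - i < nl K1 \<and> K = add_caret K1 (c - i) \<and> U = graft_at t i K1"
  using assms(1)
proof (cases rule: caret_of_graftE)
  case (inner K1)
  then show ?thesis by blast
qed (use assms(2,3) in auto)

lemma caret_of_graft_outside:
  assumes "caret_of_graft t i K U c" "\<not> (i \<le> c \<and> c + 1 < i + nl K)" "i < nl t" "nl K' = nl K"
  shows "(c + 1 < i \<or> i + nl K \<le> c) \<and>
    (\<exists>U'. c < nl U' \<and> nl U' = nl U \<and> graft_at t i K' = add_caret U' c)"
  using assms(1)
proof (cases rule: caret_of_graftE)
  case (inner K1)
  then show ?thesis using assms(2) by simp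
next
  case (left t1)
  then have "graft_at t i K' = add_caret (graft_at t1 (i - 1) K') c" "i - 1 < nl t1"
    using graft_at_add_caret_left[of c "i - 1" t1 K'] assms(3) by auto
  then show ?thesis using left assms(4) by (intro conjI exI[of _ "graft_at t1 (i - 1) K'"]) auto
next
  case (right t1)
  then have "graft_at t i K' = add_caret (graft_at t1 i K') c" "i < nl t1"
    using graft_at_add_caret_right[of i "c + 1 - nl K" t1 K'] assms(4) nl_ge1[of K] by auto
  then show ?thesis using right assms(4) by (intro conjI exI[of _ "graft_at t1 i K'"]) auto
qed

section \<open>Diagrams with pure braids\<close>

definition pure_on :: "nat \<Rightarrow> bword \<Rightarrow> bool" where
  "pure_on n w = (\<forall>p < n. bpos w p = p)"

definition pure_diag :: "diag \<Rightarrow> bool" where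
  "pure_diag D = (case D of (S, w, T) \<Rightarrow> nl S = nl T \<and> on_strands (nl S) w \<and> pure_on (nl S) w)"

fun diag_tree :: "bool \<Rightarrow> diag \<Rightarrow> tree" where
  "diag_tree True (S, w, T) = S"
| "diag_tree False (S, w, T) = T"

fun diag_caret :: "diag \<Rightarrow> nat \<Rightarrow> diag" where
  "diag_caret (S, w, T) i = (add_caret S i, cable i w, add_caret T i)"

lemma pure_diag_simp: "pure_diag (S, w, T) = (nl S = nl T \<and> on_strands (nl S) w \<and> pure_on (nl S) w)"
  by (simp add: pure_diag_def)

lemma wf_diag_simp: "wf_diag (S, w, T) = (nl S = nl T \<and> on_strands (nl S) w)"
  by (auto simp: wf_diag_def on_strands_def)

lemma pure_diag_wf: "pure_diag D \<Longrightarrow> wf_diag D"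
  by (cases D) (metis pure_diag_simp wf_diag_simp)

lemma in_BF_iff_pure_diag: "in_BF D \<longleftrightarrow> pure_diag D"
  by (cases D) (auto simp: in_BF_def pure_diag_simp wf_diag_simp pure_on_def)

lemma pure_diag_tree_pair: "pure_diag (P, [], Q) \<longleftrightarrow> nl P = nl Q"
  by (simp add: pure_diag_simp pure_on_def)

lemma nl_diag_tree: "pure_diag X \<Longrightarrow> nl (diag_tree b X) = nl (fst X)"
  by (cases X; cases b) (auto simp: pure_diag_simp)

lemma diag_tree_diag_caret [simp]: "diag_tree b (diag_caret X i) = add_caret (diag_tree b X) i"
  by (cases X; cases b) auto

lemma fst_diag_caret: "fst (diag_caret X i) = add_caret (fst X) i"
  by (cases X) auto

lemma pure_on_cable: "pure_on n w \<Longrightarrow> i < n \<Longrightarrow> pure_on (Suc n) (cable i w)"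
  unfolding pure_on_def
proof (intro allI impI)
  fix p assume w: "\<forall>p < n. bpos w p = p" and i: "i < n" and p: "p < Suc n"
  consider "p < i" | "p = i" | "p = Suc i" | q where "p = Suc q" "i < q"
    by (metis Suc_lessI lessE not_less_iff_gr_or_eq)
  then show "bpos (cable i w) p = p"
  proof cases
    case 1
    then show ?thesis using bpos_cable_other[of p i w] w i by (simp add: cable_pos_def)
  next
    case (4 q)
    then show ?thesis using bpos_cable_other[of q i w] w i p by (simp add: cable_pos_def)
  qed (use w i in \<open>simp_all add: bpos_cable_same bpos_cable_Suc\<close>)
qed

lemma pure_on_uncable: "pure_on (Suc n) (cable i w) \<Longrightarrow> i < n \<Longrightarrow> pure_on n w"
  unfolding pure_on_def
proof (intro allI impI)
  fix p assume w: "\<forall>p < Suc n. bpos (cable i w) p = p" and i: "i < n" and p: "p < n"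
  have wi: "bpos w i = i" using w[rule_format, of i] i by (simp add: bpos_cable_same)
  show "bpos w p = p"
  proof (cases "p = i")
    case False
    then have "bpos (cable i w) (cable_pos i p) = cable_pos i (bpos w p)"
      using bpos_cable_other[of p i w] wi by simp
    moreover have "cable_pos i p < Suc n" using p by (simp add: cable_pos_def)
    ultimately show ?thesis using w by (simp add: cable_pos_eq_iff)
  qed (use wi in simp)
qed

lemma pure_on_delete_strand: "pure_on (Suc n) w \<Longrightarrow> q \<le> n \<Longrightarrow> pure_on n (delete_strand q w)"
  unfolding pure_on_def
proof (intro allI impI)
  fix p assume w: "\<forall>p < Suc n. bpos w p = p" and q: "q \<le> n" and p: "p < n"
  define p' where "p' = (if p < q then p else Suc p)"
  have "q \<noteq> p'" "delete_pos q p' = p" "p' < Suc n" using p by (auto simp: p'_def delete_pos_def)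
  then show "bpos (delete_strand q w) p = p"
    using bpos_delete_strand_other[of q p' w] w q by simp
qed

lemma pure_diag_diag_caret: "pure_diag X \<Longrightarrow> i < nl (fst X) \<Longrightarrow> pure_diag (diag_caret X i)"
  by (cases X) (auto simp: pure_diag_simp on_strands_cable pure_on_cable)

lemma diag_equiv_refl [simp]: "diag_equiv X X"
  by (simp add: diag_equiv_def)

lemma diag_equiv_sym: "diag_equiv X Y \<Longrightarrow> diag_equiv Y X"
  by (simp add: diag_equiv_def equivclp_sym)

lemma diag_equiv_trans [trans]: "diag_equiv X Y \<Longrightarrow> diag_equiv Y Z \<Longrightarrow> diag_equiv X Z"
  unfolding diag_equiv_def by (rule equivclp_trans)

lemma dstep_imp_diag_equiv: "dstep X Y \<Longrightarrow> diag_equiv X Y"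
  by (simp add: diag_equiv_def r_into_equivclp)

lemma elt_eq: "diag_equiv X Y \<Longrightarrow> elt X = elt Y"
  unfolding elt_def using diag_equiv_sym diag_equiv_trans by blast

lemma diag_equiv_diag_caret: "pure_diag X \<Longrightarrow> i < nl (fst X) \<Longrightarrow> diag_equiv X (diag_caret X i)"
proof (cases X)
  case (fields S w T)
  assume X: "pure_diag X" "i < nl (fst X)"
  then have "bpos w i = i" "i < nl T" using fields by (auto simp: pure_diag_simp pure_on_def)
  moreover have "dstep (S, w, T) (expand S i, cable i w, expand T (bpos w i))"
    using X fields by (intro caret_move pure_diag_wf) (auto simp: num_leaves_def)
  ultimately show ?thesis using X fields by (simp add: expand_eq_add_caret dstep_imp_diag_equiv)
qed

lemma braid_eq_diag_equiv: "braid_eq (nl S) w w' \<Longrightarrow> wf_diag (S, w, T) \<Longrightarrow> diag_equiv (S, w, T) (S, w', T)"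
  unfolding braid_eq_def
proof (induction rule: equivclp_induct)
  case (step y z)
  then have "braid_step y z \<or> braid_step z y" "wf_diag (S, y, T)" "wf_diag (S, z, T)"
    by (auto simp: braid_step_on_def wf_diag_simp)
  then have "dstep (S, y, T) (S, z, T) \<or> dstep (S, z, T) (S, y, T)"
    by (auto intro: braid_move)
  then have "diag_equiv (S, y, T) (S, z, T)"
    by (auto intro: diag_equiv_sym dstep_imp_diag_equiv)
  then show ?case
    using step.IH step.prems by (auto intro: diag_equiv_trans)
qed simp

definition diag_sim :: "diag \<Rightarrow> diag \<Rightarrow> bool" where
  "diag_sim X Y = (pure_diag X \<and> pure_diag Y \<and> fst X = fst Y \<and> snd (snd X) = snd (snd Y) \<and>
    braid_eq (nl (fst X)) (fst (snd X)) (fst (snd Y)))"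

lemma diag_sim_simp:
  "diag_sim (S, w, T) (S', w', T') =
    (pure_diag (S, w, T) \<and> pure_diag (S', w', T') \<and> S = S' \<and> T = T' \<and> braid_eq (nl S) w w')"
  by (simp add: diag_sim_def)

lemma diag_sim_refl: "pure_diag X \<Longrightarrow> diag_sim X X"
  by (simp add: diag_sim_def)

lemma diag_sim_sym: "diag_sim X Y \<Longrightarrow> diag_sim Y X"
  by (auto simp: diag_sim_def intro: braid_eq_sym)

lemma diag_sim_trans: "diag_sim X Y \<Longrightarrow> diag_sim Y Z \<Longrightarrow> diag_sim X Z"
  by (auto simp: diag_sim_def intro: braid_eq_trans)

lemma diag_sim_nl: "diag_sim X Y \<Longrightarrow> nl (fst X) = nl (fst Y)"
  by (simp add: diag_sim_def)

lemma diag_tree_diag_sim: "diag_sim X Y \<Longrightarrow> diag_tree b X = diag_tree b Y"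
  by (cases X; cases Y; cases b) (auto simp: diag_sim_simp)

lemma diag_sim_imp_equiv: "diag_sim X Y \<Longrightarrow> diag_equiv X Y"
  by (cases X; cases Y) (auto simp: diag_sim_simp intro!: braid_eq_diag_equiv pure_diag_wf)

lemma diag_sim_diag_caret: "diag_sim X Y \<Longrightarrow> i < nl (fst X) \<Longrightarrow> diag_sim (diag_caret X i) (diag_caret Y i)"
  by (cases X; cases Y)
    (auto simp: diag_sim_simp pure_diag_simp cable_braid_eq on_strands_cable pure_on_cable)

lemma diag_caret_commute:
  assumes "pure_diag X" "i < j" "j < nl (fst X)"
  shows "diag_sim (diag_caret (diag_caret X j) i) (diag_caret (diag_caret X i) (Suc j))"
proof (cases X)
  case (fields S w T)
  then have "nl S = nl T" "on_strands (nl S) w" using assms(1) by (auto simp: pure_diag_simp)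
  then have "braid_eq (Suc (Suc (nl S))) (cable i (cable j w)) (cable (Suc j) (cable i w))"
    using cable_cable_braid_eq[of i j "nl S" w] assms(2,3) fields by (simp add: cable_pos_def)
  moreover have "pure_diag (diag_caret (diag_caret X j) i)" "pure_diag (diag_caret (diag_caret X i) (Suc j))"
    using assms by (auto intro!: pure_diag_diag_caret simp: fst_diag_caret)
  ultimately show ?thesis
    using assms fields \<open>nl S = nl T\<close> by (simp add: diag_sim_simp add_caret_commute)
qed

section \<open>Caret reductions and normal forms\<close>

definition reduces_at :: "diag \<Rightarrow> diag \<Rightarrow> nat \<Rightarrow> bool" where
  "reduces_at X Y i = (case X of (S, w, T) \<Rightarrow> case Y of (S', w', T') \<Rightarrow>
    i < nl S' \<and> S = add_caret S' i \<and> T = add_caret T' i \<and> braid_eq (nl S) w (cable i w'))"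

definition reduces :: "diag \<Rightarrow> diag \<Rightarrow> bool" where
  "reduces X Y = (pure_diag X \<and> pure_diag Y \<and> (\<exists>i. reduces_at X Y i))"

lemma reduces_at_simp:
  "reduces_at (S, w, T) (S', w', T') i =
    (i < nl S' \<and> S = add_caret S' i \<and> T = add_caret T' i \<and> braid_eq (nl S) w (cable i w'))"
  by (simp add: reduces_at_def)

lemma reduces_at_iff:
  assumes "pure_diag X" "pure_diag Y"
  shows "reduces_at X Y i \<longleftrightarrow> i < nl (fst Y) \<and> diag_sim X (diag_caret Y i)"
proof (cases X; cases Y)
  fix S w T S' w' T'
  assume e: "X = (S, w, T)" "Y = (S', w', T')"
  then have "i < nl S' \<Longrightarrow> pure_diag (diag_caret Y i)"
    using assms(2) by (intro pure_diag_diag_caret) auto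
  then show ?thesis using assms e by (auto simp: reduces_at_simp diag_sim_simp)
qed

lemma reduces_at_diag_tree_add_caret:
  assumes "reduces_at X Y c" "pure_diag X" "pure_diag Y"
  shows "c < nl (diag_tree b Y) \<and> diag_tree b X = add_caret (diag_tree b Y) c"
  using assms reduces_at_iff diag_tree_diag_sim nl_diag_tree by (metis diag_tree_diag_caret)

lemma reduces_at_diag_tree:
  assumes "reduces_at X Y c" "pure_diag X" "pure_diag Y" "diag_tree b X = add_caret M c" "c < nl M"
  shows "diag_tree b Y = M"
  using reduces_at_diag_tree_add_caret[OF assms(1-3)] assms(4,5) add_caret_inj by metis

lemma reduces_nl: "reduces X Y \<Longrightarrow> nl (fst X) = Suc (nl (fst Y))"
  by (cases X; cases Y) (auto simp: reduces_def reduces_at_simp)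

lemma reduces_diag_caret: "pure_diag Y \<Longrightarrow> i < nl (fst Y) \<Longrightarrow> reduces (diag_caret Y i) Y"
  using reduces_at_iff[of "diag_caret Y i" Y i]
  by (auto simp: reduces_def intro: diag_sim_refl pure_diag_diag_caret)

lemma reduces_at_diag_sim_left: "reduces_at X Y i \<Longrightarrow> diag_sim X X' \<Longrightarrow> reduces_at X' Y i"
  by (cases X; cases X'; cases Y)
    (auto simp: reduces_at_simp diag_sim_simp intro: braid_eq_trans braid_eq_sym)

lemma reduces_diag_sim_left: "reduces X Y \<Longrightarrow> diag_sim X X' \<Longrightarrow> reduces X' Y"
  unfolding reduces_def using reduces_at_diag_sim_left by (metis diag_sim_def)

lemma reduces_at_imp_equiv: "reduces_at X Y c \<Longrightarrow> pure_diag X \<Longrightarrow> pure_diag Y \<Longrightarrow> diag_equiv X Y"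
  using diag_equiv_diag_caret[of Y c] diag_sim_imp_equiv[of X "diag_caret Y c"]
  by (auto simp: reduces_at_iff intro: diag_equiv_trans diag_equiv_sym)

lemma reduces_imp_equiv: "reduces X Y \<Longrightarrow> diag_equiv X Y"
  by (auto simp: reduces_def intro: reduces_at_imp_equiv)

lemma reduces_at_reduces_at_less:
  assumes "pure_diag X" "pure_diag X1" "pure_diag X2" "reduces_at X X1 a" "reduces_at X1 X2 b" "a < b"
  shows "pure_diag (diag_caret X2 a) \<and> reduces_at X (diag_caret X2 a) (Suc b)"
proof -
  have b: "b < nl (fst X2)" and "diag_sim X1 (diag_caret X2 b)"
    using assms reduces_at_iff by blast+
  moreover have "a < nl (fst X1)" "diag_sim X (diag_caret X1 a)"
    using assms reduces_at_iff by blast+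
  ultimately have "diag_sim X (diag_caret (diag_caret X2 b) a)"
    using diag_sim_diag_caret diag_sim_trans by blast
  moreover have "diag_sim (diag_caret (diag_caret X2 b) a) (diag_caret (diag_caret X2 a) (Suc b))"
    using diag_caret_commute assms(3,6) b by blast
  moreover have "pure_diag (diag_caret X2 a)" using assms(3,6) b by (intro pure_diag_diag_caret) auto
  ultimately show ?thesis
    using assms b by (auto simp: reduces_at_iff fst_diag_caret intro: diag_sim_trans)
qed

lemma reduces_at_reduces_at_greater:
  assumes "pure_diag X" "pure_diag X1" "pure_diag X2" "reduces_at X X1 (Suc b)" "reduces_at X1 X2 a" "a < b"
  shows "pure_diag (diag_caret X2 b) \<and> reduces_at X (diag_caret X2 b) a"
proof -
  have a: "a < nl (fst X2)" and "diag_sim X1 (diag_caret X2 a)"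
    using assms reduces_at_iff by blast+
  moreover have "Suc b < nl (fst X1)" "diag_sim X (diag_caret X1 (Suc b))"
    using assms reduces_at_iff by blast+
  ultimately have b: "b < nl (fst X2)" and "diag_sim X (diag_caret (diag_caret X2 a) (Suc b))"
    using diag_sim_diag_caret diag_sim_trans diag_sim_nl by (auto simp: fst_diag_caret)
  moreover have "diag_sim (diag_caret (diag_caret X2 b) a) (diag_caret (diag_caret X2 a) (Suc b))"
    using diag_caret_commute assms(3,6) b by blast
  moreover have "pure_diag (diag_caret X2 b)" using assms(3) b by (intro pure_diag_diag_caret)
  ultimately show ?thesis
    using assms b by (auto simp: reduces_at_iff fst_diag_caret intro: diag_sim_trans diag_sim_sym)
qed

lemma reduces_at_same_confluent:
  assumes "reduces_at X Y1 i" "reduces_at X Y2 i" "pure_diag X" "pure_diag Y1" "pure_diag Y2"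
  shows "diag_sim Y1 Y2"
proof (cases X; cases Y1; cases Y2)
  fix S w T S1 w1 T1 S2 w2 T2
  assume e: "X = (S, w, T)" "Y1 = (S1, w1, T1)" "Y2 = (S2, w2, T2)"
  then have i: "i < nl S1" "i < nl S2" and s: "S = add_caret S1 i" "S = add_caret S2 i"
    "T = add_caret T1 i" "T = add_caret T2 i" and b: "braid_eq (nl S) w (cable i w1)" "braid_eq (nl S) w (cable i w2)"
    using assms(1,2) unfolding e reduces_at_simp by blast+
  have "nl S1 = nl T1" "nl S2 = nl T2" using assms(4,5) e by (auto simp: pure_diag_simp)
  then have eq: "S1 = S2" "T1 = T2" using i s add_caret_inj by metis+
  have "braid_eq (nl S) (cable i w1) (cable i w2)"
    using b by (blast intro: braid_eq_trans braid_eq_sym)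
  then have "braid_eq (nl S1) (delete_strand (Suc i) (cable i w1)) (delete_strand (Suc i) (cable i w2))"
    using s i by (intro delete_strand_braid_eq) auto
  then show "diag_sim Y1 Y2" using e assms(4,5) eq by (simp add: diag_sim_simp delete_strand_cable_Suc)
qed

lemma reduces_at_less_confluent:
  assumes "reduces_at X Y1 i" "reduces_at X Y2 j" "i < j" "pure_diag X" "pure_diag Y1" "pure_diag Y2"
  shows "\<exists>Z1 Z2. reduces_at Y1 Z1 (j - 1) \<and> reduces_at Y2 Z2 i \<and> diag_sim Z1 Z2"
proof (cases X; cases Y1; cases Y2)
  fix S w T S1 w1 T1 S2 w2 T2
  assume e: "X = (S, w, T)" "Y1 = (S1, w1, T1)" "Y2 = (S2, w2, T2)"
  then have i: "i < nl S1" "j < nl S2" and s: "S = add_caret S1 i" "S = add_caret S2 j"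
    "T = add_caret T1 i" "T = add_caret T2 j" and b: "braid_eq (nl S) w (cable i w1)" "braid_eq (nl S) w (cable j w2)"
    using assms(1,2) unfolding e reduces_at_simp by blast+
  have p: "nl S1 = nl T1" "nl S2 = nl T2" "on_strands (nl S1) w1" "on_strands (nl S2) w2"
    "pure_on (nl S1) w1" "pure_on (nl S2) w2"
    using assms(5,6) e by (auto simp: pure_diag_simp)
  obtain V where V: "Suc i < j" "S1 = add_caret V (j - 1)" "S2 = add_caret V i" "j - 1 < nl V"
    using add_caret_eq_add_caret[OF assms(3) i] s by metis
  obtain V' where V': "T1 = add_caret V' (j - 1)" "T2 = add_caret V' i" "j - 1 < nl V'"
    using add_caret_eq_add_caret[OF assms(3), of T1 T2] s i p by metis
  have n: "nl S = Suc (Suc (nl V))" "nl S1 = Suc (nl V)" "nl S2 = Suc (nl V)" "nl V = nl V'"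
    using s i V V' p by auto
  define z1 z2 where "z1 = delete_strand (Suc i) w2" and "z2 = delete_strand j w1"
  have "braid_eq (nl S) (cable i w1) (cable j w2)"
    using b by (blast intro: braid_eq_trans braid_eq_sym)
  then have "braid_eq (Suc (Suc (nl V))) (cable i w1) (cable j w2)"
    using n(1) by simp
  then have "braid_eq (Suc (nl V)) w1 (cable (j - 1) z1)" "braid_eq (Suc (nl V)) w2 (cable i z2)"
    "braid_eq (nl V) z1 z2"
    using cable_braid_eq_cable[of "nl V" i w1 j w2] V n p unfolding z1_def z2_def by auto
  moreover have "pure_diag (V, z1, V')" "pure_diag (V, z2, V')"
    using p n V by (auto simp: pure_diag_simp z1_def z2_def intro!: on_strands_delete_strand pure_on_delete_strand)
  ultimately show ?thesis
    using V V' n e by (intro exI[of _ "(V, z1, V')"] exI[of _ "(V, z2, V')"]) (auto simp: reduces_at_simp diag_sim_simp)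
qed

lemma reduces_local_confluent:
  assumes "reduces X Y1" "reduces X Y2"
  shows "diag_sim Y1 Y2 \<or> (\<exists>Z1 Z2. reduces Y1 Z1 \<and> reduces Y2 Z2 \<and> diag_sim Z1 Z2)"
proof -
  obtain i j where r: "reduces_at X Y1 i" "reduces_at X Y2 j"
    and p: "pure_diag X" "pure_diag Y1" "pure_diag Y2"
    using assms by (auto simp: reduces_def)
  consider "i = j" | "i < j" | "j < i" by linarith
  then show ?thesis
  proof cases
    case 1
    then show ?thesis using reduces_at_same_confluent r p by blast
  next
    case 2
    then obtain Z1 Z2 where "reduces_at Y1 Z1 (j - 1)" "reduces_at Y2 Z2 i" "diag_sim Z1 Z2"
      using reduces_at_less_confluent[OF r 2 p] by blast
    moreover from this have "reduces Y1 Z1" "reduces Y2 Z2"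
      using p by (auto simp: reduces_def diag_sim_def)
    ultimately show ?thesis by blast
  next
    case 3
    then obtain Z1 Z2 where "reduces_at Y2 Z1 (i - 1)" "reduces_at Y1 Z2 j" "diag_sim Z1 Z2"
      using reduces_at_less_confluent[OF r(2) r(1) 3 p(1) p(3) p(2)] by blast
    moreover from this have "reduces Y1 Z2" "reduces Y2 Z1"
      using p by (auto simp: reduces_def diag_sim_def)
    ultimately show ?thesis using diag_sim_sym by blast
  qed
qed

definition irreducible :: "diag \<Rightarrow> bool" where
  "irreducible X = (pure_diag X \<and> (\<nexists>Y. reduces X Y))"

definition normal_form :: "diag \<Rightarrow> diag \<Rightarrow> bool" where
  "normal_form X Z = (reduces\<^sup>*\<^sup>* X Z \<and> irreducible Z)"

lemma irreducible_reduces_atE: "irreducible X \<Longrightarrow> reduces_at X Y c \<Longrightarrow> pure_diag Y \<Longrightarrow> P"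
  unfolding irreducible_def reduces_def by blast

lemma irreducible_normal_form: "irreducible Z \<Longrightarrow> normal_form Z Z"
  by (simp add: normal_form_def)

lemma reduces_rtrancl_nl: "reduces\<^sup>*\<^sup>* X Y \<Longrightarrow> nl (fst Y) \<le> nl (fst X)"
  by (induction rule: rtranclp_induct) (auto dest: reduces_nl)

lemma reduces_rtrancl_imp_equiv: "reduces\<^sup>*\<^sup>* X Y \<Longrightarrow> diag_equiv X Y"
  by (induction rule: rtranclp_induct) (auto intro: diag_equiv_trans reduces_imp_equiv)

lemma normal_form_exists: "pure_diag X \<Longrightarrow> \<exists>Z. normal_form X Z"
proof (induction "nl (fst X)" arbitrary: X rule: less_induct)
  case less
  show ?case
  proof (cases "irreducible X")
    case False
    then obtain Y where Y: "reduces X Y" using less.prems by (auto simp: irreducible_def)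
    then obtain Z where "normal_form Y Z"
      using less.hyps reduces_nl reduces_def by (metis lessI)
    then have "normal_form X Z"
      using Y unfolding normal_form_def by (meson converse_rtranclp_into_rtranclp)
    then show ?thesis by blast
  qed (blast intro: irreducible_normal_form)
qed

lemma irreducible_diag_sim:
  assumes "irreducible X" "diag_sim X X'"
  shows "irreducible X'"
proof -
  have "\<not> reduces X' Y" for Y
    using assms reduces_diag_sim_left[of X' Y X] diag_sim_sym unfolding irreducible_def by blast
  then show ?thesis using assms(2) by (auto simp: irreducible_def diag_sim_def)
qed

lemma normal_form_diag_sim:
  assumes "diag_sim X X'" "normal_form X Z"
  shows "\<exists>Z'. normal_form X' Z' \<and> diag_sim Z Z'"
proof -
  have "reduces\<^sup>*\<^sup>* X Z" "irreducible Z" using assms(2) by (auto simp: normal_form_def)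
  then show ?thesis
  proof (cases rule: converse_rtranclpE)
    case base
    then have "normal_form X' X'"
      using assms(1) irreducible_diag_sim[of Z X'] \<open>irreducible Z\<close> by (auto simp: normal_form_def)
    then show ?thesis using base assms(1) by blast
  next
    case (step Y)
    then have "normal_form X' Z"
      using assms(1) reduces_diag_sim_left \<open>irreducible Z\<close> unfolding normal_form_def
      by (meson converse_rtranclp_into_rtranclp)
    moreover have "diag_sim Z Z" using \<open>irreducible Z\<close> by (simp add: irreducible_def diag_sim_refl)
    ultimately show ?thesis by blast
  qed
qed

text \<open>Newman's lemma, modulo braid relations, by induction on the number of leaves.\<close>

lemma normal_form_unique: "normal_form X Z1 \<Longrightarrow> normal_form X Z2 \<Longrightarrow> diag_sim Z1 Z2"
proof (induction "nl (fst X)" arbitrary: X Z1 Z2 rule: less_induct)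
  case less
  then have r: "reduces\<^sup>*\<^sup>* X Z1" "reduces\<^sup>*\<^sup>* X Z2" "irreducible Z1" "irreducible Z2"
    by (auto simp: normal_form_def)
  show ?case
  proof (cases "\<exists>Y. reduces X Y")
    case False
    then have "X = Z1" "X = Z2" using r by (auto elim: converse_rtranclpE)
    then show ?thesis using r by (auto simp: irreducible_def intro: diag_sim_refl)
  next
    case True
    then have "X \<noteq> Z1" "X \<noteq> Z2" using r by (auto simp: irreducible_def)
    then obtain Y1 Y2 where "reduces X Y1" "reduces\<^sup>*\<^sup>* Y1 Z1" "reduces X Y2" "reduces\<^sup>*\<^sup>* Y2 Z2"
      using r by (metis converse_rtranclpE)
    then have y: "reduces X Y1" "reduces X Y2" "normal_form Y1 Z1" "normal_form Y2 Z2"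
      using r by (auto simp: normal_form_def)
    have "nl (fst Y1) < nl (fst X)" "nl (fst Y2) < nl (fst X)"
      using reduces_nl[OF y(1)] reduces_nl[OF y(2)] by auto
    then have IH: "normal_form Y Z \<Longrightarrow> normal_form Y Z' \<Longrightarrow> diag_sim Z Z'" if "Y = Y1 \<or> Y = Y2" for Y Z Z'
      using less.hyps that by blast
    from reduces_local_confluent[OF y(1,2)] show ?thesis
    proof
      assume "diag_sim Y1 Y2"
      then obtain Z1' where "normal_form Y2 Z1'" "diag_sim Z1 Z1'"
        using normal_form_diag_sim y(3) by blast
      then show ?thesis using IH[of Y2] y(4) diag_sim_trans by blast
    next
      assume "\<exists>W1 W2. reduces Y1 W1 \<and> reduces Y2 W2 \<and> diag_sim W1 W2"
      then obtain W1 W2 where w: "reduces Y1 W1" "reduces Y2 W2" "diag_sim W1 W2" by blast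
      obtain Q where Q: "normal_form W1 Q" using normal_form_exists w reduces_def by blast
      then obtain Q' where Q': "normal_form W2 Q'" "diag_sim Q Q'"
        using normal_form_diag_sim w(3) by blast
      have "normal_form Y1 Q" "normal_form Y2 Q'"
        using Q Q' w by (auto simp: normal_form_def)
      then have "diag_sim Z1 Q" "diag_sim Q' Z2"
        using IH[of Y1 Z1 Q] IH[of Y2 Q' Z2] y(3,4) by blast+
      then show ?thesis using Q'(2) diag_sim_trans by blast
    qed
  qed
qed

lemma dstep_pure_diag_iff: "dstep X Y \<Longrightarrow> pure_diag X \<longleftrightarrow> pure_diag Y"
proof (induction rule: dstep.induct)
  case (braid_move Tp w Tm w')
  then have "bpos w = bpos w'" using braid_step_bpos by blast
  then show ?case using braid_move by (auto simp: pure_diag_simp wf_diag_simp pure_on_def)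
next
  case (caret_move Tp w Tm i)
  have wf: "nl Tp = nl Tm" "on_strands (nl Tp) w" using caret_move by (auto simp: wf_diag_simp)
  show ?case
  proof
    assume p: "pure_diag (Tp, w, Tm)"
    then have "bpos w i = i" using caret_move by (auto simp: pure_diag_simp pure_on_def)
    then show "pure_diag (expand Tp i, cable i w, expand Tm (bpos w i))"
      using pure_diag_diag_caret[OF p] caret_move wf by (simp add: expand_eq_add_caret)
  next
    assume "pure_diag (expand Tp i, cable i w, expand Tm (bpos w i))"
    then have "pure_on (nl (expand Tp i)) (cable i w)" unfolding pure_diag_simp by blast
    then have "pure_on (Suc (nl Tp)) (cable i w)" using caret_move(2) by (simp add: expand_eq_add_caret)
    then show "pure_diag (Tp, w, Tm)" using caret_move(2) wf pure_on_uncable by (simp add: pure_diag_simp)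
  qed
qed

lemma dstep_normal_form:
  "dstep X Y \<Longrightarrow> pure_diag X \<Longrightarrow> normal_form X Z \<Longrightarrow> normal_form Y Z' \<Longrightarrow> diag_sim Z Z'"
proof (induction rule: dstep.induct)
  case (braid_move Tp w Tm w')
  then have "diag_sim (Tp, w, Tm) (Tp, w', Tm)"
    using dstep_pure_diag_iff[OF dstep.braid_move[OF braid_move.hyps]]
    by (auto simp: diag_sim_simp braid_step_on_def wf_diag_simp intro: braid_step_on_imp_eq)
  then show ?case
    using normal_form_diag_sim normal_form_unique braid_move.prems diag_sim_trans by blast
next
  case (caret_move Tp w Tm i)
  then have "bpos w i = i" by (auto simp: pure_diag_simp pure_on_def)
  then have "(expand Tp i, cable i w, expand Tm (bpos w i)) = diag_caret (Tp, w, Tm) i"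
    using caret_move by (auto simp: expand_eq_add_caret pure_diag_simp)
  moreover have "reduces (diag_caret (Tp, w, Tm) i) (Tp, w, Tm)"
    using caret_move by (intro reduces_diag_caret) auto
  then have "normal_form (diag_caret (Tp, w, Tm) i) Z"
    using caret_move.prems unfolding normal_form_def by (meson converse_rtranclp_into_rtranclp)
  ultimately show ?case using caret_move.prems(3) normal_form_unique by simp
qed

lemma diag_equiv_normal_form:
  "diag_equiv X Y \<Longrightarrow> pure_diag X \<Longrightarrow>
    pure_diag Y \<and> (\<forall>Z Z'. normal_form X Z \<longrightarrow> normal_form Y Z' \<longrightarrow> diag_sim Z Z')"
  unfolding diag_equiv_def
proof (induction rule: equivclp_induct)
  case base
  then show ?case using normal_form_unique by blast
next
  case (step y z)
  then have y: "pure_diag y" and IH: "\<forall>Z Z'. normal_form X Z \<longrightarrow> normal_form y Z' \<longrightarrow> diag_sim Z Z'"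
    by auto
  have z: "pure_diag z" using step.hyps(2) dstep_pure_diag_iff y by blast
  obtain W where W: "normal_form y W" using normal_form_exists y by blast
  have "diag_sim W Z'" if "normal_form z Z'" for Z'
    using step.hyps(2) dstep_normal_form[of y z W Z'] dstep_normal_form[of z y Z' W] y z W that
    by (auto intro: diag_sim_sym)
  then show ?case using z IH W diag_sim_trans by blast
qed

lemma diag_equiv_pure_diag: "diag_equiv X Y \<Longrightarrow> pure_diag X \<Longrightarrow> pure_diag Y"
  using diag_equiv_normal_form by blast

lemma diag_equiv_irreducible_reduces:
  assumes "diag_equiv Z X" "irreducible Z"
  shows "\<exists>Z'. reduces\<^sup>*\<^sup>* X Z' \<and> diag_sim Z' Z"
proof -
  have "pure_diag Z" using assms(2) by (simp add: irreducible_def)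
  moreover obtain Z' where "normal_form X Z'"
    using normal_form_exists diag_equiv_pure_diag assms calculation by blast
  ultimately show ?thesis
    using diag_equiv_normal_form[OF assms(1)] irreducible_normal_form[OF assms(2)] diag_sim_sym
    unfolding normal_form_def by blast
qed

lemma NN_elt_irreducible: "irreducible Z \<Longrightarrow> NN (elt Z) = nl (fst Z)"
  unfolding NN_def
proof (rule Least_equality)
  show "\<exists>D \<in> elt Z. dleaves D = nl (fst Z)"
    by (rule bexI[of _ Z]) (auto simp: elt_def dleaves_def)
next
  fix n assume Z: "irreducible Z" and "\<exists>D \<in> elt Z. dleaves D = n"
  then obtain D where "diag_equiv Z D" "dleaves D = n" by (auto simp: elt_def)
  moreover obtain Z' where "reduces\<^sup>*\<^sup>* D Z'" "diag_sim Z' Z"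
    using diag_equiv_irreducible_reduces Z calculation(1) by blast
  ultimately show "nl (fst Z) \<le> n"
    using reduces_rtrancl_nl[of D Z'] diag_sim_nl[of Z' Z] by (simp add: dleaves_def)
qed

lemma reduced_irreducible:
  assumes "pure_diag D" "reduced D"
  shows "irreducible D"
proof -
  have False if "reduces D Y" for Y
  proof -
    have "Y \<in> elt D" using that reduces_imp_equiv by (simp add: elt_def)
    then have "NN (elt D) \<le> dleaves Y" unfolding NN_def by (blast intro: Least_le)
    then show False using assms(2) reduces_nl[OF that] by (simp add: reduced_def dleaves_def)
  qed
  then show ?thesis using assms(1) by (auto simp: irreducible_def)
qed

section \<open>Irreducible diagrams are determined by one of their trees\<close>

lemma reduces_rtrancl_subtree: "reduces\<^sup>*\<^sup>* X Y \<Longrightarrow> subtree (diag_tree b Y) (diag_tree b X)"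
proof (induction rule: rtranclp_induct)
  case (step Y Z)
  then obtain i where "reduces_at Y Z i" "pure_diag Y" "pure_diag Z" by (auto simp: reduces_def)
  then have "i < nl (diag_tree b Z)" "diag_tree b Y = add_caret (diag_tree b Z) i"
    using reduces_at_diag_tree_add_caret by blast+
  then show ?case using step.IH subtree_add_caret subtree_trans by metis
qed simp

lemma diag_equiv_irreducible_subtree:
  "diag_equiv Z X \<Longrightarrow> irreducible Z \<Longrightarrow> subtree (diag_tree b Z) (diag_tree b X)"
  using diag_equiv_irreducible_reduces reduces_rtrancl_subtree diag_tree_diag_sim by metis

lemma diag_equiv_irreducible_reducible:
  assumes "diag_equiv Z X" "irreducible Z" "nl (fst Z) < nl (fst X)"
  shows "\<exists>X1 j. reduces_at X X1 j \<and> pure_diag X1"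
proof -
  obtain Z' where "reduces\<^sup>*\<^sup>* X Z'" "diag_sim Z' Z"
    using diag_equiv_irreducible_reduces assms(1,2) by blast
  moreover have "X \<noteq> Z'" using diag_sim_nl[OF calculation(2)] assms(3) by auto
  ultimately show ?thesis by (metis converse_rtranclpE reduces_def)
qed

lemma diag_equiv_irreducible_reduces_at:
  "diag_equiv Z X \<Longrightarrow> irreducible Z \<Longrightarrow> diag_tree b X = add_caret U c \<Longrightarrow> c < nl U \<Longrightarrow>
    subtree (diag_tree b Z) U \<Longrightarrow> \<exists>Y. reduces_at X Y c \<and> pure_diag Y"
proof (induction "nl (fst X)" arbitrary: X U c rule: less_induct)
  case less
  have Z: "pure_diag Z" using less.prems by (simp add: irreducible_def)
  have X: "pure_diag X" using diag_equiv_pure_diag less.prems(1) Z .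
  have "nl (diag_tree b Z) < nl (diag_tree b X)"
    using less.prems(3-5) subtree_nl[OF less.prems(5)] by simp
  then have "nl (fst Z) < nl (fst X)" using nl_diag_tree Z X by metis
  then obtain X1 j where X1: "reduces_at X X1 j" "pure_diag X1"
    using diag_equiv_irreducible_reducible[OF less.prems(1,2)] by blast
  then have j: "j < nl (diag_tree b X1)" "diag_tree b X = add_caret (diag_tree b X1) j"
    using X reduces_at_diag_tree_add_caret by blast+
  have ZX1: "diag_equiv Z X1"
    using less.prems(1) reduces_at_imp_equiv[OF X1(1) X X1(2)] by (blast intro: diag_equiv_trans)
  then have sub: "subtree (diag_tree b Z) (diag_tree b X1)"
    using diag_equiv_irreducible_subtree less.prems(2) by blast
  have less: "nl (fst X1) < nl (fst X)"
    using X1 X reduces_nl unfolding reduces_def by fastforce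
  consider "j = c" | "j < c" | "c < j" by linarith
  then show ?case
  proof cases
    case 1
    then show ?thesis using X1 by blast
  next
    case 2
    then obtain V where V: "Suc j < c" "diag_tree b X1 = add_caret V (c - 1)" "U = add_caret V j" "c - 1 < nl V"
      using add_caret_eq_add_caret[OF 2 j(1) less.prems(4)] j(2) less.prems(3) by metis
    then have "subtree (diag_tree b Z) V"
      using subtree_add_caret_meet[of _ V "c - 1" j] sub less.prems(5) by auto
    then obtain X2 where "reduces_at X1 X2 (c - 1)" "pure_diag X2"
      using less.hyps[OF less ZX1 less.prems(2) V(2,4)] by blast
    then have "pure_diag (diag_caret X2 j) \<and> reduces_at X (diag_caret X2 j) c"
      using reduces_at_reduces_at_less[OF X X1(2) _ X1(1), of X2 "c - 1"] V(1) by auto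
    then show ?thesis by blast
  next
    case 3
    then obtain V where V: "Suc c < j" "U = add_caret V (j - 1)" "diag_tree b X1 = add_caret V c" "j - 1 < nl V"
      using add_caret_eq_add_caret[OF 3 less.prems(4) j(1)] j(2) less.prems(3) by metis
    then have "subtree (diag_tree b Z) V"
      using subtree_add_caret_meet[of _ V c "j - 1"] sub less.prems(5) by auto
    moreover have "c < nl V" using V(1,4) by simp
    ultimately obtain X2 where "reduces_at X1 X2 c" "pure_diag X2"
      using less.hyps[OF less ZX1 less.prems(2) V(3)] by blast
    then have "pure_diag (diag_caret X2 (j - 1)) \<and> reduces_at X (diag_caret X2 (j - 1)) c"
      using reduces_at_reduces_at_greater[OF X X1(2), of X2 "j - 1" c] X1(1) V(1) by auto
    then show ?thesis by blast
  qed
qed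

lemma diag_equiv_irreducible_same_tree_base:
  assumes "diag_equiv Z W" "irreducible Z" "diag_tree b W = diag_tree b Z"
  shows "diag_sim W Z"
proof -
  obtain Z1 where Z1: "reduces\<^sup>*\<^sup>* W Z1" "diag_sim Z1 Z"
    using diag_equiv_irreducible_reduces assms(1,2) by blast
  have "W = Z1"
  proof (rule ccontr)
    assume "W \<noteq> Z1"
    then obtain W1 where W1: "reduces W W1" using Z1 by (metis converse_rtranclpE)
    then have "diag_equiv Z W1"
      using assms(1) reduces_imp_equiv by (blast intro: diag_equiv_trans diag_equiv_sym)
    then have "nl (diag_tree b Z) \<le> nl (diag_tree b W1)"
      using diag_equiv_irreducible_subtree assms(2) subtree_nl by blast
    moreover have "pure_diag W" "pure_diag W1" using W1 by (auto simp: reduces_def)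
    ultimately show False
      using reduces_nl[OF W1] assms(3) nl_diag_tree[of W b] nl_diag_tree[of W1 b] by simp
  qed
  then show ?thesis using Z1 by simp
qed

lemma diag_equiv_irreducible_same_tree:
  "diag_equiv Z X \<Longrightarrow> diag_equiv Z X' \<Longrightarrow> irreducible Z \<Longrightarrow> diag_tree b X = diag_tree b X' \<Longrightarrow>
    diag_sim X X'"
proof (induction "nl (fst X)" arbitrary: X X' rule: less_induct)
  case less
  have Z: "pure_diag Z" using less.prems by (simp add: irreducible_def)
  have X: "pure_diag X" "pure_diag X'" using diag_equiv_pure_diag less.prems(1,2) Z by blast+
  show ?case
  proof (cases "diag_tree b X = diag_tree b Z")
    case True
    then show ?thesis
      using diag_equiv_irreducible_same_tree_base less.prems diag_sim_trans diag_sim_sym by metis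
  next
    case False
    moreover have "subtree (diag_tree b Z) (diag_tree b X)"
      using diag_equiv_irreducible_subtree less.prems by blast
    ultimately obtain U c where U: "c < nl U" "diag_tree b X = add_caret U c" "subtree (diag_tree b Z) U"
      using subtree_bottom_caret by metis
    obtain Y Y' where Y: "reduces_at X Y c" "pure_diag Y" "reduces_at X' Y' c" "pure_diag Y'"
      using diag_equiv_irreducible_reduces_at[OF _ less.prems(3)] less.prems(1,2,4) U by metis
    then have "diag_tree b Y = U" "diag_tree b Y' = U"
      using reduces_at_diag_tree X U less.prems(4) by metis+
    moreover have "diag_equiv Z Y" "diag_equiv Z Y'"
      using less.prems(1,2) reduces_at_imp_equiv X Y by (blast intro: diag_equiv_trans)+
    moreover have "nl (fst Y) < nl (fst X)"
      using X Y reduces_nl unfolding reduces_def by fastforce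
    ultimately have "diag_sim Y Y'" using less.hyps less.prems(3) by metis
    then have "diag_sim (diag_caret Y c) (diag_caret Y' c)"
      using diag_sim_diag_caret Y X reduces_at_iff by blast
    then show ?thesis
      using X Y reduces_at_iff diag_sim_trans diag_sim_sym by metis
  qed
qed

section \<open>Stacking diagrams\<close>

fun stack :: "diag \<Rightarrow> diag \<Rightarrow> diag" where
  "stack (A, w, M) (M', w', B) = (A, w @ w', B)"

lemma fst_stack: "fst (stack X Y) = fst X"
  by (cases X; cases Y) auto

lemma pure_diag_stack:
  "pure_diag X \<Longrightarrow> pure_diag Y \<Longrightarrow> diag_tree False X = diag_tree True Y \<Longrightarrow> pure_diag (stack X Y)"
  by (cases X; cases Y) (auto simp: pure_diag_simp pure_on_def)

lemma diag_sim_stack: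
  assumes "diag_sim X X'" "diag_sim Y Y'" "diag_tree False X = diag_tree True Y"
  shows "diag_sim (stack X Y) (stack X' Y')"
proof (cases X; cases X'; cases Y; cases Y')
  fix A w M A' w' M' N v B N' v' B'
  assume e: "X = (A, w, M)" "X' = (A', w', M')" "Y = (N, v, B)" "Y' = (N', v', B')"
  have eq: "A = A'" "M = M'" "N = N'" "B = B'" "M = N" "braid_eq (nl A) w w'" "braid_eq (nl N) v v'"
    using assms e by (auto simp: diag_sim_simp)
  have p: "pure_diag X" "pure_diag X'" "pure_diag Y" "pure_diag Y'"
    using assms by (auto simp: diag_sim_def)
  then have "on_strands (nl A) w" "on_strands (nl N) v" "nl A = nl M"
    using e by (auto simp: pure_diag_simp)
  then have "braid_eq (nl A) (w @ v) (w' @ v')"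
    using eq by (intro braid_eq_append) auto
  moreover have "pure_diag (stack X Y)" "pure_diag (stack X' Y')"
    using pure_diag_stack[OF p(1,3) assms(3)] pure_diag_stack[OF p(2,4)] assms(3)
      diag_tree_diag_sim[OF assms(1), of False] diag_tree_diag_sim[OF assms(2), of True] by simp_all
  ultimately show ?thesis using e eq by (simp add: diag_sim_simp)
qed

lemma stack_reduces_at_equiv:
  assumes "reduces_at X X1 c" "reduces_at Y Y1 c" "pure_diag X" "pure_diag Y" "pure_diag X1" "pure_diag Y1"
    and "diag_tree False X = diag_tree True Y" "diag_tree False X1 = diag_tree True Y1"
  shows "diag_equiv (stack X Y) (stack X1 Y1)"
proof -
  have c: "c < nl (fst X1)" "diag_sim X (diag_caret X1 c)" "diag_sim Y (diag_caret Y1 c)"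
    using assms reduces_at_iff by blast+
  then have "diag_sim (stack X Y) (stack (diag_caret X1 c) (diag_caret Y1 c))"
    using diag_sim_stack assms(7) by blast
  moreover have "stack (diag_caret X1 c) (diag_caret Y1 c) = diag_caret (stack X1 Y1) c"
    using assms(5,6,8) c(1) by (cases X1; cases Y1) (auto simp: pure_diag_simp pure_on_def)
  moreover have "diag_equiv (stack X1 Y1) (diag_caret (stack X1 Y1) c)"
    using pure_diag_stack assms(5,6,8) c(1) by (intro diag_equiv_diag_caret) (auto simp: fst_stack)
  ultimately have "diag_equiv (stack X Y) (diag_caret (stack X1 Y1) c)"
    using diag_sim_imp_equiv by simp
  then show ?thesis using \<open>diag_equiv (stack X1 Y1) _\<close> by (blast intro: diag_equiv_trans diag_equiv_sym)
qed

text \<open>Carets of the glued tree outside the join of the two irreducible trees are removed one at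
  a time.\<close>

lemma stack_equiv_join_tree:
  "diag_equiv Zg X \<Longrightarrow> irreducible Zg \<Longrightarrow> diag_equiv Zh Y \<Longrightarrow> irreducible Zh \<Longrightarrow>
    diag_tree False X = diag_tree True Y \<Longrightarrow>
    \<exists>X' Y'. diag_equiv Zg X' \<and> diag_equiv Zh Y' \<and>
      diag_tree False X' = tree_join (diag_tree False Zg) (diag_tree True Zh) \<and>
      diag_tree True Y' = diag_tree False X' \<and> diag_equiv (stack X Y) (stack X' Y')"
proof (induction "nl (fst X)" arbitrary: X Y rule: less_induct)
  case less
  have X: "pure_diag X" "pure_diag Y"
    using diag_equiv_pure_diag less.prems by (auto simp: irreducible_def)
  let ?U = "tree_join (diag_tree False Zg) (diag_tree True Zh)"
  have "subtree (diag_tree False Zg) (diag_tree False X)" "subtree (diag_tree True Zh) (diag_tree False X)"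
    using diag_equiv_irreducible_subtree less.prems by metis+
  then have sub: "subtree ?U (diag_tree False X)" using tree_join_least by blast
  show ?case
  proof (cases "diag_tree False X = ?U")
    case False
    then obtain M c where M: "c < nl M" "diag_tree False X = add_caret M c" "subtree ?U M"
      using subtree_bottom_caret sub by metis
    then have "subtree (diag_tree False Zg) M" "subtree (diag_tree True Zh) M"
      using subtree_trans subtree_join1 subtree_join2 by blast+
    then obtain X1 Y1 where X1: "reduces_at X X1 c" "pure_diag X1" "reduces_at Y Y1 c" "pure_diag Y1"
      using diag_equiv_irreducible_reduces_at[OF less.prems(1,2) M(2,1)]
        diag_equiv_irreducible_reduces_at[OF less.prems(3,4), of True M c] less.prems(5) M by auto
    then have M1: "diag_tree False X1 = M" "diag_tree True Y1 = M"
      using reduces_at_diag_tree[of X X1 c False M] reduces_at_diag_tree[of Y Y1 c True M]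
        X M less.prems(5) by auto
    have "diag_equiv Zg X1" "diag_equiv Zh Y1"
      using less.prems(1,3) reduces_at_imp_equiv X X1 by (blast intro: diag_equiv_trans)+
    moreover have "nl (fst X1) < nl (fst X)"
      using X X1 reduces_nl unfolding reduces_def by fastforce
    ultimately obtain X' Y' where IH: "diag_equiv Zg X'" "diag_equiv Zh Y'"
      "diag_tree False X' = ?U" "diag_tree True Y' = diag_tree False X'" "diag_equiv (stack X1 Y1) (stack X' Y')"
      using less.hyps[of X1 Y1] less.prems(2,4) M1 by auto
    moreover have "diag_equiv (stack X Y) (stack X1 Y1)"
      using stack_reduces_at_equiv[OF X1(1,3) X X1(2,4) less.prems(5)] M1 by simp
    ultimately show ?thesis by (blast intro: diag_equiv_trans)
  qed (use less.prems in \<open>intro exI[of _ X] exI[of _ Y], auto\<close>)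
qed

lemma stack_equiv_independent:
  assumes "diag_equiv Zg X" "diag_equiv Zg X'" "irreducible Zg"
    and "diag_equiv Zh Y" "diag_equiv Zh Y'" "irreducible Zh"
    and "diag_tree False X = diag_tree True Y" "diag_tree False X' = diag_tree True Y'"
  shows "diag_equiv (stack X Y) (stack X' Y')"
proof -
  obtain X1 Y1 where 1: "diag_equiv Zg X1" "diag_equiv Zh Y1"
    "diag_tree False X1 = tree_join (diag_tree False Zg) (diag_tree True Zh)"
    "diag_tree True Y1 = diag_tree False X1" "diag_equiv (stack X Y) (stack X1 Y1)"
    using stack_equiv_join_tree[OF assms(1,3,4,6,7)] by blast
  obtain X2 Y2 where 2: "diag_equiv Zg X2" "diag_equiv Zh Y2"
    "diag_tree False X2 = tree_join (diag_tree False Zg) (diag_tree True Zh)"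
    "diag_tree True Y2 = diag_tree False X2" "diag_equiv (stack X' Y') (stack X2 Y2)"
    using stack_equiv_join_tree[OF assms(2,3,5,6,8)] by blast
  have "diag_sim X1 X2" "diag_sim Y1 Y2"
    using diag_equiv_irreducible_same_tree[of Zg X1 X2 False] diag_equiv_irreducible_same_tree[of Zh Y1 Y2 True]
      assms(3,6) 1 2 by simp_all
  then have "diag_equiv (stack X1 Y1) (stack X2 Y2)" using diag_sim_stack 1(4) diag_sim_imp_equiv by simp
  then show ?thesis using 1(5) 2(5) by (blast intro: diag_equiv_trans diag_equiv_sym)
qed

lemma mult_elt:
  assumes "pure_diag g" "pure_diag h" "diag_equiv g X" "diag_equiv h Y"
    and "diag_tree False X = diag_tree True Y"
  shows "mult (elt g) (elt h) = elt (stack X Y)"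
proof -
  obtain Zg Zh where Z: "normal_form g Zg" "normal_form h Zh"
    using normal_form_exists assms(1,2) by blast
  then have irr: "irreducible Zg" "irreducible Zh" by (auto simp: normal_form_def)
  have eq: "diag_equiv Zg g" "diag_equiv Zh h"
    using Z reduces_rtrancl_imp_equiv diag_equiv_sym unfolding normal_form_def by blast+
  have "D \<in> elt (stack X Y)" if prod: "D \<in> mult (elt g) (elt h)" for D
  proof -
    obtain Tp w M w' Sm where D: "diag_equiv g (Tp, w, M)" "diag_equiv h (M, w', Sm)"
      "diag_equiv (Tp, w @ w', Sm) D"
      using prod unfolding mult_def elt_def by blast
    have "diag_equiv Zg (Tp, w, M)" "diag_equiv Zh (M, w', Sm)" "diag_equiv Zg X" "diag_equiv Zh Y"
      using eq assms(3,4) D(1,2) by (blast intro: diag_equiv_trans)+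
    then have "diag_equiv (stack (Tp, w, M) (M, w', Sm)) (stack X Y)"
      using stack_equiv_independent[of Zg "(Tp, w, M)" X Zh "(M, w', Sm)" Y] irr assms(5) by simp
    then show ?thesis using D(3) by (auto simp: elt_def intro: diag_equiv_trans diag_equiv_sym)
  qed
  moreover have "D \<in> mult (elt g) (elt h)" if "D \<in> elt (stack X Y)" for D
    using that assms(3-5) by (cases X; cases Y) (simp add: mult_def elt_def, blast)
  ultimately show ?thesis by blast
qed

section \<open>Grafting tree pairs\<close>

lemma pure_diag_graft_tree_pair:
  "nl P = nl Q \<Longrightarrow> j < nl T \<Longrightarrow> pure_diag (graft_at T j P, [], graft_at T j Q)"
  by (simp add: pure_diag_tree_pair)

lemma reduces_at_graft_tree_pair:
  assumes "reduces_at (P1, w1, Q1) (P2, w2, Q2) c" "pure_diag (P2, w2, Q2)" "braid_eq (nl P1) w1 []"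
    and "j < nl T"
  shows "braid_eq (nl P2) w2 []"
    and "diag_equiv (graft_at T j P1, [], graft_at T j Q1) (graft_at T j P2, [], graft_at T j Q2)"
proof -
  have c: "c < nl P2" "P1 = add_caret P2 c" "Q1 = add_caret Q2 c" "braid_eq (nl P1) w1 (cable c w2)"
    using assms(1) by (auto simp: reduces_at_simp)
  have P2: "nl P2 = nl Q2" using assms(2) by (simp add: pure_diag_simp)
  have "braid_eq (Suc (nl P2)) (cable c w2) []"
    using c assms(3) by (auto intro: braid_eq_trans braid_eq_sym)
  then have "braid_eq (nl P2) (delete_strand (Suc c) (cable c w2)) (delete_strand (Suc c) [])"
    using c by (intro delete_strand_braid_eq) auto
  then show "braid_eq (nl P2) w2 []" by (simp add: delete_strand_cable_Suc)
  have "diag_equiv (graft_at T j P2, [], graft_at T j Q2)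
      (diag_caret (graft_at T j P2, [], graft_at T j Q2) (j + c))"
    using P2 c assms(4) by (intro diag_equiv_diag_caret pure_diag_graft_tree_pair) auto
  then show "diag_equiv (graft_at T j P1, [], graft_at T j Q1) (graft_at T j P2, [], graft_at T j Q2)"
    using c P2 assms(4) by (simp add: graft_at_add_caret_inner diag_equiv_sym)
qed

lemma tree_pair_irreducible:
  assumes "nl P = nl Q"
  obtains K1 K2 where "irreducible (K1, [], K2)" "diag_equiv (P, [], Q) (K1, [], K2)"
    "\<And>T j. j < nl T \<Longrightarrow>
      diag_equiv (graft_at T j P, [], graft_at T j Q) (graft_at T j K1, [], graft_at T j K2)"
proof -
  obtain K where K: "normal_form (P, [], Q) K"
    using normal_form_exists pure_diag_tree_pair assms by blast
  obtain K1 k K2 where K12: "K = (K1, k, K2)" by (cases K)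
  have reduce: "braid_eq (nl (fst Y)) (fst (snd Y)) [] \<and>
      diag_equiv (graft_at T j P, [], graft_at T j Q) (graft_at T j (fst Y), [], graft_at T j (snd (snd Y)))"
    if "reduces\<^sup>*\<^sup>* (P, [], Q) Y" "j < nl T" for Y T j
    using that
  proof (induction rule: rtranclp_induct)
    case (step Y Z)
    then show ?case
      using reduces_at_graft_tree_pair[of "fst Y" "fst (snd Y)" "snd (snd Y)" "fst Z" "fst (snd Z)"
          "snd (snd Z)" _ j T]
      by (auto simp: reduces_def intro: diag_equiv_trans)
  qed simp
  have "braid_eq (nl K1) k []"
    using reduce[where Y = K and T = Leaf and j = 0] K K12 by (simp add: normal_form_def)
  moreover have irr: "irreducible (K1, k, K2)" using K K12 by (simp add: normal_form_def)
  ultimately have sim: "diag_sim (K1, k, K2) (K1, [], K2)"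
    by (auto simp: irreducible_def diag_sim_simp pure_diag_simp pure_on_def)
  show thesis
  proof (rule that)
    show "irreducible (K1, [], K2)" using irr sim by (rule irreducible_diag_sim)
    show "diag_equiv (P, [], Q) (K1, [], K2)"
      using K K12 sim reduces_rtrancl_imp_equiv diag_sim_imp_equiv diag_equiv_trans
      unfolding normal_form_def by blast
    show "diag_equiv (graft_at T j P, [], graft_at T j Q) (graft_at T j K1, [], graft_at T j K2)"
      if "j < nl T" for T j
      using reduce[where Y = K and T = T and j = j] that K K12 by (simp add: normal_form_def)
  qed
qed

lemma graft_at_subtree_step:
  assumes "subtree T0 U" "T0 \<noteq> U" "j0 < nl T0" "k < nl U" "leaves T0 ! j0 = leaves U ! k"
  obtains U1 k1 c where "subtree T0 U1" "k1 < nl U1" "leaves T0 ! j0 = leaves U1 ! k1" "nl U1 < nl U"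
    "\<And>P. c (nl P) < nl (graft_at U1 k1 P) \<and> graft_at U k P = add_caret (graft_at U1 k1 P) (c (nl P))"
proof -
  obtain U1 c k1 where U1: "c < nl U1" "U = add_caret U1 c" "subtree T0 U1" "k1 < nl U1" "k1 \<noteq> c"
    "leaves U1 ! k1 = leaves U ! k" "k = (if c < k1 then Suc k1 else k1)"
    using subtree_bottom_caret_leaf[OF assms] by blast
  show thesis
  proof (rule that[of U1 k1 "\<lambda>n. if c < k1 then c else c + n - 1"])
    show "(if c < k1 then c else c + nl P - 1) < nl (graft_at U1 k1 P) \<and>
        graft_at U k P = add_caret (graft_at U1 k1 P) (if c < k1 then c else c + nl P - 1)" for P
      using U1 graft_at_add_caret_other[OF U1(1,4,5), of P] nl_ge1[of P] by auto
  qed (use U1 assms(5) in auto)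
qed

lemma graft_lift_equiv:
  "subtree T0 U \<Longrightarrow> j0 < nl T0 \<Longrightarrow> k < nl U \<Longrightarrow> leaves T0 ! j0 = leaves U ! k \<Longrightarrow> nl P = nl Q \<Longrightarrow>
    pure_diag (A, w, graft_at T0 j0 P) \<Longrightarrow>
    \<exists>A' w'. diag_equiv (A, w, graft_at T0 j0 P) (A', w', graft_at U k P) \<and>
      diag_equiv (A, w, graft_at T0 j0 Q) (A', w', graft_at U k Q)"
proof (induction "nl U" arbitrary: U k rule: less_induct)
  case less
  show ?case
  proof (cases "U = T0")
    case False
    then obtain U1 k1 c where U1: "subtree T0 U1" "k1 < nl U1" "leaves T0 ! j0 = leaves U1 ! k1"
      "nl U1 < nl U"
      "\<And>P. c (nl P) < nl (graft_at U1 k1 P) \<and> graft_at U k P = add_caret (graft_at U1 k1 P) (c (nl P))"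
      using graft_at_subtree_step less.prems(1-4) by metis
    obtain A1 w1 where IH: "diag_equiv (A, w, graft_at T0 j0 P) (A1, w1, graft_at U1 k1 P)"
      "diag_equiv (A, w, graft_at T0 j0 Q) (A1, w1, graft_at U1 k1 Q)"
      using less.hyps[OF U1(4,1) less.prems(2) U1(2,3) less.prems(5,6)] by blast
    have "pure_diag (A1, w1, graft_at U1 k1 P)" using diag_equiv_pure_diag IH(1) less.prems(6) .
    moreover have "nl (graft_at U1 k1 Q) = nl (graft_at U1 k1 P)" using U1(2) less.prems(5) by simp
    ultimately have "pure_diag (A1, w1, graft_at U1 k1 Q)" by (metis pure_diag_simp)
    then have "diag_equiv (A1, w1, graft_at U1 k1 R) (diag_caret (A1, w1, graft_at U1 k1 R) (c (nl P)))"
      if "R = P \<or> R = Q" for R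
      using that \<open>pure_diag (A1, w1, graft_at U1 k1 P)\<close> U1(5)[of P] less.prems(5)
      by (intro diag_equiv_diag_caret) (auto simp: pure_diag_simp)
    then show ?thesis
      using IH U1(5)[of P] U1(5)[of Q] less.prems(5) by (auto intro: diag_equiv_trans)
  qed (use less.prems leaves_nth_inj[of j0 T0 k] in \<open>auto intro!: exI[of _ A] exI[of _ w]\<close>)
qed

lemma graft_lift_equiv_tree_pair:
  "subtree T0 U \<Longrightarrow> j0 < nl T0 \<Longrightarrow> k < nl U \<Longrightarrow> leaves T0 ! j0 = leaves U ! k \<Longrightarrow> nl P = nl Q \<Longrightarrow>
    diag_equiv (graft_at T0 j0 P, [], graft_at T0 j0 Q) (graft_at U k P, [], graft_at U k Q)"
proof (induction "nl U" arbitrary: U k rule: less_induct)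
  case less
  show ?case
  proof (cases "U = T0")
    case False
    then obtain U1 k1 c where U1: "subtree T0 U1" "k1 < nl U1" "leaves T0 ! j0 = leaves U1 ! k1"
      "nl U1 < nl U"
      "\<And>P. c (nl P) < nl (graft_at U1 k1 P) \<and> graft_at U k P = add_caret (graft_at U1 k1 P) (c (nl P))"
      using graft_at_subtree_step less.prems(1-4) by metis
    have "diag_equiv (graft_at U1 k1 P, [], graft_at U1 k1 Q)
        (diag_caret (graft_at U1 k1 P, [], graft_at U1 k1 Q) (c (nl P)))"
      using U1(2,5) less.prems(5) by (intro diag_equiv_diag_caret pure_diag_graft_tree_pair) auto
    then show ?thesis
      using less.hyps[OF U1(4,1) less.prems(2) U1(2,3) less.prems(5)] U1(5)[of P] U1(5)[of Q]
        less.prems(5) by (auto intro: diag_equiv_trans)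
  qed (use less.prems leaves_nth_inj[of j0 T0 k] in auto)
qed

text \<open>\<open>block_expansion Z i t W\<close>: \<open>W\<close> arises from \<open>Z\<close> by \<open>t\<close> carets, each added at a leaf that
  descends from leaf \<open>i\<close> of \<open>Z\<close>; these leaves form the block \<open>i, \<dots>, i + t\<close>.\<close>

inductive block_expansion :: "diag \<Rightarrow> nat \<Rightarrow> nat \<Rightarrow> diag \<Rightarrow> bool" where
  block_expansion_0: "block_expansion Z i 0 Z"
| block_expansion_Suc:
    "block_expansion Z i t W \<Longrightarrow> i \<le> j \<Longrightarrow> j \<le> i + t \<Longrightarrow> block_expansion Z i (Suc t) (diag_caret W j)"

lemma block_expansion_zero: "block_expansion Z i 0 W \<Longrightarrow> W = Z"
  by (cases rule: block_expansion.cases) auto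

lemma block_expansion_props:
  "block_expansion Z i t W \<Longrightarrow> pure_diag Z \<Longrightarrow> i < nl (fst Z) \<Longrightarrow>
    pure_diag W \<and> nl (fst W) = nl (fst Z) + t \<and> diag_equiv Z W"
proof (induction rule: block_expansion.induct)
  case (block_expansion_Suc Z i t W j)
  then have W: "pure_diag W" "nl (fst W) = nl (fst Z) + t" "diag_equiv Z W" "j < nl (fst W)"
    by auto
  then have "diag_equiv Z (diag_caret W j)"
    using diag_equiv_diag_caret diag_equiv_trans by blast
  then show ?case using W pure_diag_diag_caret by (simp add: fst_diag_caret)
qed simp

lemma block_expansion_reduces_outside:
  "block_expansion Z i t W \<Longrightarrow> pure_diag Z \<Longrightarrow> i < nl (fst Z) \<Longrightarrow> reduces_at W Y c \<Longrightarrow>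
    pure_diag Y \<Longrightarrow> c + 1 < i \<or> i + t < c \<Longrightarrow> \<exists>Y'. reduces_at Z Y' (if c < i then c else c - t) \<and> pure_diag Y'"
proof (induction arbitrary: Y c rule: block_expansion.induct)
  case (block_expansion_0 Z i)
  then show ?case by (intro exI[of _ Y]) auto
next
  case (block_expansion_Suc Z i t W j)
  have W: "pure_diag W" "nl (fst W) = nl (fst Z) + t"
    using block_expansion_props block_expansion_Suc by blast+
  then have j: "j < nl (fst W)" using block_expansion_Suc by linarith
  then have WW: "pure_diag (diag_caret W j)" "reduces_at (diag_caret W j) W j"
    using W pure_diag_diag_caret reduces_at_iff diag_sim_refl by blast+
  consider "c < j" | "j < c" using block_expansion_Suc.prems(5) block_expansion_Suc.hyps(2,3) by linarith
  then show ?case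
  proof cases
    case 1
    then obtain Z1 Z2 where Z2: "reduces_at W Z2 c" "diag_sim Z1 Z2"
      using reduces_at_less_confluent[OF block_expansion_Suc.prems(3) WW(2) 1 WW(1)
          block_expansion_Suc.prems(4) W(1)] by blast
    moreover have "pure_diag Z2" using Z2(2) by (simp add: diag_sim_def)
    moreover have "c + 1 < i" using 1 block_expansion_Suc by linarith
    ultimately show ?thesis
      using block_expansion_Suc.IH[OF block_expansion_Suc.prems(1,2) Z2(1)] by auto
  next
    case 2
    then obtain Z1 Z2 where Z1: "reduces_at W Z1 (c - 1)" "diag_sim Z1 Z2"
      using reduces_at_less_confluent[OF WW(2) block_expansion_Suc.prems(3) 2 WW(1) W(1)
          block_expansion_Suc.prems(4)] by blast
    moreover have "pure_diag Z1" using Z1(2) by (simp add: diag_sim_def)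
    moreover have "i + t < c - 1" "\<not> c < i" "\<not> c - 1 < i" "c - 1 - t = c - Suc t"
      using block_expansion_Suc 2 by linarith+
    ultimately show ?thesis
      using block_expansion_Suc.IH[OF block_expansion_Suc.prems(1,2) Z1(1)] by auto
  qed
qed

lemma block_expansion_exists:
  "pure_diag (S, w, T) \<Longrightarrow> i < nl S \<Longrightarrow>
    \<exists>w'. block_expansion (S, w, T) i (nl K - 1) (graft_at S i K, w', graft_at T i K)"
proof (induction "nl K" arbitrary: K rule: less_induct)
  case less
  show ?case
  proof (cases "K = Leaf")
    case False
    then obtain K1 c where K1: "c < nl K1" "K = add_caret K1 c" using Node_eq_add_caret by blast
    then obtain w1 where "block_expansion (S, w, T) i (nl K1 - 1) (graft_at S i K1, w1, graft_at T i K1)"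
      using less by fastforce
    then have "block_expansion (S, w, T) i (Suc (nl K1 - 1))
        (diag_caret (graft_at S i K1, w1, graft_at T i K1) (i + c))"
      using K1 by (intro block_expansion_Suc) auto
    moreover have "nl K - 1 = Suc (nl K1 - 1)" "i < nl T"
      using K1 nl_ge1[of K1] less.prems by (auto simp: pure_diag_simp)
    ultimately show ?thesis
      using K1 less.prems by (auto simp: graft_at_add_caret_inner)
  qed (auto intro: block_expansion_0)
qed

section \<open>The product with a grafted element of \<open>F\<close>\<close>

text \<open>A caret of the grafted diagram is either a caret of \<open>(K1, K2)\<close> or, lying outside the block
  of \<open>K1\<close>, a caret of the block expansion, hence of \<open>g\<close>.\<close>

lemma graft_irreducible:
  assumes g: "irreducible (Tp, \<sigma>, Tm)" and K: "irreducible (K1, [], K2)" "nl K1 = nl K2"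
    and W: "block_expansion (Tp, \<sigma>, Tm) i (nl K1 - 1) (graft_at Tp i K1, w, graft_at Tm i K1)"
    and i: "i < nl Tp"
  shows "irreducible (graft_at Tp i K1, w, graft_at Tm i K2)"
proof (cases "nl K1 = 1")
  case True
  then have "K1 = Leaf" "K2 = Leaf" using K(2) nl_eq_1 by auto
  then have "block_expansion (Tp, \<sigma>, Tm) i 0 (Tp, w, Tm)" using W True by simp
  then show ?thesis using g block_expansion_zero \<open>K1 = Leaf\<close> \<open>K2 = Leaf\<close> by fastforce
next
  case False
  then have K1: "2 \<le> nl K1" using nl_ge1[of K1] by linarith
  have pg: "pure_diag (Tp, \<sigma>, Tm)" and Tm: "i < nl Tm"
    using g i by (auto simp: irreducible_def pure_diag_simp)
  then have "pure_diag (graft_at Tp i K1, w, graft_at Tm i K1)"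
    using block_expansion_props[OF W] i by simp
  moreover have "nl (graft_at Tm i K2) = nl (graft_at Tm i K1)" using K(2) Tm by simp
  ultimately have D: "pure_diag (graft_at Tp i K1, w, graft_at Tm i K2)"
    by (metis pure_diag_simp)
  have False if r: "reduces_at (graft_at Tp i K1, w, graft_at Tm i K2) Y c" and Y: "pure_diag Y" for Y c
  proof -
    obtain S w' T' where Y': "Y = (S, w', T')" by (cases Y)
    then have c: "c < nl S" "graft_at Tp i K1 = add_caret S c" "graft_at Tm i K2 = add_caret T' c"
      "braid_eq (nl (graft_at Tp i K1)) w (cable c w')" "nl S = nl T'"
      using r Y by (auto simp: reduces_at_simp pure_diag_simp)
    then have top: "caret_of_graft Tp i K1 S c" and bottom: "caret_of_graft Tm i K2 T' c"
      using graft_at_eq_add_caret K1 K(2) i Tm by auto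
    show False
    proof (cases "i \<le> c \<and> c + 1 < i + nl K1")
      case True
      then obtain L1 L2 where "K1 = add_caret L1 (c - i)" "K2 = add_caret L2 (c - i)"
        "c - i < nl L1" "c - i < nl L2"
        using caret_of_graft_inner[OF top] caret_of_graft_inner[OF bottom] K(2) by metis
      then have "reduces_at (K1, [], K2) (L1, [], L2) (c - i)" "pure_diag (L1, [], L2)"
        using K(2) by (auto simp: reduces_at_simp pure_diag_tree_pair)
      then show False using K(1) irreducible_reduces_atE by blast
    next
      case False
      then obtain U where U: "c + 1 < i \<or> i + nl K1 \<le> c" "c < nl U" "nl U = nl T'"
        "graft_at Tm i K1 = add_caret U c"
        using caret_of_graft_outside[OF bottom _ Tm, of K1] K(2) by auto
      then have "reduces_at (graft_at Tp i K1, w, graft_at Tm i K1) (S, w', U) c" "pure_diag (S, w', U)"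
        using c Y Y' by (auto simp: reduces_at_simp pure_diag_simp)
      then show False
        using block_expansion_reduces_outside[OF W pg _ _ _] U(1) K1 i g irreducible_reduces_atE by fastforce
    qed
  qed
  then show ?thesis using D by (auto simp: irreducible_def reduces_def)
qed

lemma mult_graft:
  assumes g: "pure_diag (Tp, \<sigma>, Tm)" "i < nl Tp" and K: "nl K1 = nl K2"
    and j: "j < nl T" "leaves T ! j = leaves Tm ! i"
    and W: "block_expansion (Tp, \<sigma>, Tm) i (nl K1 - 1) (graft_at Tp i K1, w, graft_at Tm i K1)"
  shows "mult (elt (Tp, \<sigma>, Tm)) (elt (graft_at T j K1, [], graft_at T j K2))
    = elt (graft_at Tp i K1, w, graft_at Tm i K2)"
proof -
  define U where "U = tree_join Tm T"
  have Tm: "i < nl Tm" using g by (simp add: pure_diag_simp)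
  obtain k where k: "k < nl U" "leaves U ! k = leaves Tm ! i"
    using tree_join_leaf[OF Tm j(1)] j(2) by (auto simp: U_def)
  have W': "pure_diag (graft_at Tp i K1, w, graft_at Tm i K1)"
    "diag_equiv (Tp, \<sigma>, Tm) (graft_at Tp i K1, w, graft_at Tm i K1)"
    using block_expansion_props[OF W g(1)] g(2) by auto
  obtain A w' where A: "diag_equiv (graft_at Tp i K1, w, graft_at Tm i K1) (A, w', graft_at U k K1)"
    "diag_equiv (graft_at Tp i K1, w, graft_at Tm i K2) (A, w', graft_at U k K2)"
    using graft_lift_equiv[OF _ Tm k(1) k(2)[symmetric] K W'(1)] subtree_join1 by (auto simp: U_def)
  have "diag_equiv (graft_at T j K1, [], graft_at T j K2) (graft_at U k K1, [], graft_at U k K2)"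
    using graft_lift_equiv_tree_pair[OF _ j(1) k(1) _ K] subtree_join2 j(2) k(2) by (auto simp: U_def)
  then have "mult (elt (Tp, \<sigma>, Tm)) (elt (graft_at T j K1, [], graft_at T j K2))
      = elt (stack (A, w', graft_at U k K1) (graft_at U k K1, [], graft_at U k K2))"
    using W'(2) A(1) g(1) K j(1) by (intro mult_elt pure_diag_graft_tree_pair) (auto intro: diag_equiv_trans)
  also have "\<dots> = elt (graft_at Tp i K1, w, graft_at Tm i K2)"
    using A(2) elt_eq diag_equiv_sym by simp
  finally show ?thesis .
qed

theorem lemma4p17:
  fixes Tp Tm Hp Hm T :: tree and \<sigma> :: bword and i :: nat and u v :: "bool list"
  assumes "in_BF (Tp, \<sigma>, Tm)"
    and "reduced (Tp, \<sigma>, Tm)"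
    and "i < num_leaves Tp" and "u = leaves Tp ! i" and "v = leaves Tm ! bpos \<sigma> i"
    and "in_F (Hp, [], Hm)"
    and "v \<in> set (leaves T)"
  shows "NN (mult (elt (Tp, \<sigma>, Tm)) (elt (sub_at T v Hp Hm)))
           = NN (elt (Tp, \<sigma>, Tm)) + NN (elt (Hp, [], Hm)) - 1"
proof -
  have g: "pure_diag (Tp, \<sigma>, Tm)" using assms(1) by (simp add: in_BF_iff_pure_diag)
  then have "irreducible (Tp, \<sigma>, Tm)" "NN (elt (Tp, \<sigma>, Tm)) = nl Tp"
    using reduced_irreducible assms(2) by (auto simp: reduced_def dleaves_def)
  moreover have v: "v = leaves Tm ! i" using g assms(3,5) by (simp add: pure_diag_simp pure_on_def)
  obtain K1 K2 where K: "irreducible (K1, [], K2)" "diag_equiv (Hp, [], Hm) (K1, [], K2)"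
    and graft: "\<And>T j. j < nl T \<Longrightarrow>
      diag_equiv (graft_at T j Hp, [], graft_at T j Hm) (graft_at T j K1, [], graft_at T j K2)"
    using tree_pair_irreducible assms(6) by (metis in_F_def wf_diag_simp prod.case)
  then have nK: "nl K1 = nl K2" by (simp add: irreducible_def pure_diag_tree_pair)
  obtain j where j: "j < nl T" "leaves T ! j = v"
    using assms(7) by (auto simp: in_set_conv_nth num_leaves_def)
  obtain w where W: "block_expansion (Tp, \<sigma>, Tm) i (nl K1 - 1) (graft_at Tp i K1, w, graft_at Tm i K1)"
    using block_expansion_exists g assms(3) by blast
  have "sub_at T v Hp Hm = (graft_at T j Hp, [], graft_at T j Hm)"
    using graft_eq_graft_at[OF j(1)] j(2) by (simp add: sub_at_def)
  then have "elt (sub_at T v Hp Hm) = elt (graft_at T j K1, [], graft_at T j K2)"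
    using graft[OF j(1)] elt_eq by simp
  then have "mult (elt (Tp, \<sigma>, Tm)) (elt (sub_at T v Hp Hm)) = elt (graft_at Tp i K1, w, graft_at Tm i K2)"
    using mult_graft[OF g assms(3) nK j(1) _ W] j(2) v by simp
  moreover have "irreducible (graft_at Tp i K1, w, graft_at Tm i K2)"
    using graft_irreducible \<open>irreducible (Tp, \<sigma>, Tm)\<close> K(1) nK W assms(3) by blast
  moreover have "NN (elt (Hp, [], Hm)) = nl K1"
    using elt_eq[OF K(2)] NN_elt_irreducible[OF K(1)] by simp
  ultimately show ?thesis using NN_elt_irreducible assms(3) by simp
qed

end
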